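(* There is an absolute constant $c>0$ such that for every $n$, every $\epsilon\in(0,1)$ and every symmetric PSD $A\in\mathbb{R}^{n\times n}$ with $\max_{i,j}|A_{ij}|\le 1$, Algorithm E run with $p=\min(1, \frac{c}{\epsilon n})$ returns, with probability at least $3/4$, a unit vector $u\in\mathbb{R}^n$ with $u^TAu \ge \lambda_1(A) - \epsilon n$, where $\lambda_1(A)$ is the largest eigenvalue of $A$.
   Context: Algorithm E: include each column index $i\in[n]$ independently with probability $p$; let $S\in\mathbb{R}^{n\times m}$ be the matrix whose columns are the standard basis vectors $e_i$ of the included indices. Query the columns $AS$ of $A$, and from $AS$ and $S$ compute $S^TAS$ and $S^TA^2S=(AS)^T(AS)$. If $S^TAS = 0$, return an arbitrary unit vector. Otherwise find $x\in\mathbb{R}^m$ with $x^TS^TASx>0$ maximizing $\frac{x^TS^TA^2Sx}{x^TS^TASx}$, and return $u = \frac{ASx}{\|ASx\|_2}$. *)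

theory Defs
  imports "Jordan_Normal_Form.Char_Poly" "HOL-Probability.Product_PMF"
begin

definition sample_set :: "nat \<Rightarrow> real \<Rightarrow> nat set pmf" where
  "sample_set n p = map_pmf (\<lambda>f. {i. i < n \<and> f i}) (Pi_pmf {..<n} False (\<lambda>_. bernoulli_pmf p))"

definition sel_mat :: "nat \<Rightarrow> nat set \<Rightarrow> real Matrix.mat" where
  "sel_mat n T = Matrix.mat n (card T) (\<lambda>(i, k). if i = sorted_list_of_set T ! k then 1 else 0)"

definition vnorm :: "real Matrix.vec \<Rightarrow> real" where
  "vnorm v = sqrt (scalar_prod v v)"

text \<open>All possible outputs of Algorithm E on the sample T (any maximiser, any
  arbitrary unit vector in the degenerate case).\<close>
definition algE_outputs :: "real Matrix.mat \<Rightarrow> nat set \<Rightarrow> real Matrix.vec set" where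
  "algE_outputs A T =
    (let n = dim_row A; m = card T; S = sel_mat n T; AS = A * S;
         B = transpose_mat S * A * S; C = transpose_mat AS * AS
     in if B = 0\<^sub>m m m then {u. u \<in> carrier_vec n \<and> vnorm u = 1}
        else {(1 / vnorm (AS *\<^sub>v x)) \<cdot>\<^sub>v (AS *\<^sub>v x) | x.
                x \<in> carrier_vec m \<and> scalar_prod x (B *\<^sub>v x) > 0 \<and>
                (\<forall>y \<in> carrier_vec m. scalar_prod y (B *\<^sub>v y) > 0 \<longrightarrow>
                    (scalar_prod y (C *\<^sub>v y)) / (scalar_prod y (B *\<^sub>v y)) \<le> (scalar_prod x (C *\<^sub>v x)) / (scalar_prod x (B *\<^sub>v x)))})"

definition psd_mat :: "real Matrix.mat \<Rightarrow> bool" where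
  "psd_mat A = (\<forall>x \<in> carrier_vec (dim_row A). scalar_prod x (A *\<^sub>v x) \<ge> 0)"

definition lambda1 :: "real Matrix.mat \<Rightarrow> real" where
  "lambda1 A = Max {k. eigenvalue A k}"

end

(*
  Let v be a unit top eigenvector of A, \<lambda> = \<lambda>\<^sub>1(A) and N = \<epsilon> n; only \<lambda> > N needs an argument.
  For x in the sample space, the output u = A S x / |A S x| satisfies u\<^sup>T A u \<ge> |A z|\<^sup>2 / z\<^sup>T A z
  with z = S x, by Cauchy-Schwarz for the form of A, and x maximises exactly this ratio. So it
  suffices that the restriction y of v to the sample satisfies |A y|\<^sup>2 > (\<lambda> - N) y\<^sup>T A y.
  The difference is a quadratic form in the indicators of the sample with matrix
  M = A\<^sup>2 - (\<lambda> - N) A, weighted by v. Its off-diagonal part has mean at least p\<^sup>2 N (\<lambda> - 1)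
  because M v = N \<lambda> v, while |A\<^sub>i\<^sub>j| \<le> 1 and v\<^sub>i\<^sup>2 \<le> 1/\<lambda> bound its variance; with p = 4096/N,
  Markov's and Chebyshev's inequalities leave failure probability at most 1/4.
  Since \<lambda>\<^sub>1 is defined as the largest eigenvalue, it is first identified with the maximal
  Rayleigh quotient: if that maximum \<mu> were not an eigenvalue, \<mu> I - A would be invertible
  and positive semidefinite, hence coercive, contradicting maximality.
*)
theory Submission
  imports Defs
begin

section \<open>Bilinear forms of kernels\<close>

text \<open>An \<open>n \<times> n\<close> matrix is represented by its entry function; values at indices \<open>\<ge> n\<close> are ignored.\<close>

definition bilin :: "nat \<Rightarrow> (nat \<Rightarrow> nat \<Rightarrow> real) \<Rightarrow> (nat \<Rightarrow> real) \<Rightarrow> (nat \<Rightarrow> real) \<Rightarrow> real" where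
  "bilin n a x y = (\<Sum>i<n. \<Sum>j<n. x i * a i j * y j)"

definition mulv :: "nat \<Rightarrow> (nat \<Rightarrow> nat \<Rightarrow> real) \<Rightarrow> (nat \<Rightarrow> real) \<Rightarrow> nat \<Rightarrow> real" where
  "mulv n a x i = (\<Sum>j<n. a i j * x j)"

definition sym_kernel :: "nat \<Rightarrow> (nat \<Rightarrow> nat \<Rightarrow> real) \<Rightarrow> bool" where
  "sym_kernel n a = (\<forall>i<n. \<forall>j<n. a i j = a j i)"

definition psd_kernel :: "nat \<Rightarrow> (nat \<Rightarrow> nat \<Rightarrow> real) \<Rightarrow> bool" where
  "psd_kernel n a = (\<forall>x. 0 \<le> bilin n a x x)"

abbreviation sqnorm :: "nat \<Rightarrow> (nat \<Rightarrow> real) \<Rightarrow> real" where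
  "sqnorm n x \<equiv> \<Sum>i<n. (x i)\<^sup>2"

definition basis :: "nat \<Rightarrow> nat \<Rightarrow> real" where
  "basis i j = (if j = i then 1 else 0)"

lemma bilin_mulv: "bilin n a x y = (\<Sum>i<n. x i * mulv n a y i)"
  unfolding bilin_def mulv_def by (simp add: sum_distrib_left mult.assoc)

lemma bilin_cong:
  "(\<And>i. i < n \<Longrightarrow> x i = x' i) \<Longrightarrow> (\<And>i. i < n \<Longrightarrow> y i = y' i) \<Longrightarrow> bilin n a x y = bilin n a x' y'"
  unfolding bilin_def by (intro sum.cong) auto

lemma mulv_cong: "(\<And>i. i < n \<Longrightarrow> x i = x' i) \<Longrightarrow> mulv n a x j = mulv n a x' j"
  unfolding mulv_def by (intro sum.cong) auto

lemma bilin_commute: "sym_kernel n a \<Longrightarrow> bilin n a x y = bilin n a y x"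
  unfolding bilin_def sym_kernel_def
  by (subst sum.swap) (auto intro!: sum.cong simp: mult.commute mult.left_commute)

lemma bilin_scale: "bilin n a (\<lambda>i. c * x i) (\<lambda>i. c * x i) = c\<^sup>2 * bilin n a x x"
  unfolding bilin_def by (simp add: sum_distrib_left power2_eq_square algebra_simps)

lemma bilin_add_scaled:
  assumes "sym_kernel n a"
  shows "bilin n a (\<lambda>i. x i + t * y i) (\<lambda>i. x i + t * y i) =
    bilin n a y y * t\<^sup>2 + 2 * bilin n a x y * t + bilin n a x x"
proof -
  have "bilin n a (\<lambda>i. x i + t * y i) (\<lambda>i. x i + t * y i) =
      bilin n a x x + t * bilin n a x y + t * bilin n a y x + t\<^sup>2 * bilin n a y y"
    unfolding bilin_def by (simp add: algebra_simps sum.distrib sum_distrib_left power2_eq_square)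
  thus ?thesis using bilin_commute[OF assms, of x y] by (simp add: algebra_simps)
qed

lemma bilin_self_mulv: "sym_kernel n a \<Longrightarrow> bilin n a x (mulv n a x) = sqnorm n (mulv n a x)"
  by (subst bilin_commute) (simp_all add: bilin_mulv power2_eq_square)

lemma basis_mult: "basis i k * z = (if k = i then z else 0)" "z * basis i k = (if k = i then z else 0)"
  by (simp_all add: basis_def)

lemma bilin_basis_left: "i < n \<Longrightarrow> bilin n a (basis i) y = mulv n a y i"
  by (simp add: bilin_mulv basis_mult sum.delta')

lemma mulv_basis: "i < n \<Longrightarrow> mulv n a (basis i) k = a k i"
  by (simp add: mulv_def basis_mult sum.delta')

lemma bilin_basis_basis: "i < n \<Longrightarrow> bilin n a (basis i) (basis i) = a i i"
  by (simp add: bilin_basis_left mulv_basis)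

lemma sqnorm_basis: "i < n \<Longrightarrow> sqnorm n (basis i) = 1"
  unfolding power2_eq_square basis_mult by (simp add: sum.delta' basis_def)

lemma psd_kernel_diag_nonneg: "psd_kernel n a \<Longrightarrow> i < n \<Longrightarrow> 0 \<le> a i i"
  using bilin_basis_basis[of i n a] unfolding psd_kernel_def by metis

lemma nonneg_quadratic_discriminant:
  fixes \<alpha> \<beta> \<gamma> :: real
  assumes "0 \<le> \<alpha>" and nonneg: "\<And>t. 0 \<le> \<alpha> * t\<^sup>2 + 2 * \<beta> * t + \<gamma>"
  shows "\<beta>\<^sup>2 \<le> \<alpha> * \<gamma>"
proof (cases "\<alpha> = 0")
  case True
  have "\<beta> = 0"
  proof (rule ccontr)
    assume "\<beta> \<noteq> 0"
    then have "2 * \<beta> * (- (\<bar>\<gamma>\<bar> + 1) / (2 * \<beta>)) + \<gamma> < 0" by simp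
    then show False using nonneg[of "- (\<bar>\<gamma>\<bar> + 1) / (2 * \<beta>)"] True by simp
  qed
  then show ?thesis using True by simp
next
  case False
  then have \<alpha>: "\<alpha> > 0" using \<open>0 \<le> \<alpha>\<close> by simp
  have "0 \<le> \<alpha> * (- \<beta> / \<alpha>)\<^sup>2 + 2 * \<beta> * (- \<beta> / \<alpha>) + \<gamma>" by (rule nonneg)
  also have "\<dots> = \<gamma> - \<beta>\<^sup>2 / \<alpha>" using \<alpha> by (simp add: power2_eq_square field_simps)
  finally show ?thesis using \<alpha> by (simp add: field_simps)
qed

lemma psd_kernel_cauchy_schwarz:
  assumes "sym_kernel n a" "psd_kernel n a"
  shows "(bilin n a x y)\<^sup>2 \<le> bilin n a x x * bilin n a y y"
proof -
  have "(bilin n a x y)\<^sup>2 \<le> bilin n a y y * bilin n a x x"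
    by (rule nonneg_quadratic_discriminant)
      (use assms in \<open>auto simp: psd_kernel_def bilin_add_scaled[symmetric]\<close>)
  thus ?thesis by (simp add: mult.commute)
qed

lemma sqnorm_mulv_le_trace:
  assumes "sym_kernel n a" "psd_kernel n a"
  shows "sqnorm n (mulv n a x) \<le> (\<Sum>i<n. a i i) * bilin n a x x"
proof -
  have "(mulv n a x i)\<^sup>2 \<le> a i i * bilin n a x x" if "i < n" for i
    using psd_kernel_cauchy_schwarz[OF assms, of "basis i" x] that
    by (simp add: bilin_basis_left mulv_basis)
  then have "sqnorm n (mulv n a x) \<le> (\<Sum>i<n. a i i * bilin n a x x)" by (intro sum_mono) auto
  thus ?thesis by (simp add: sum_distrib_right)
qed

lemma sqnorm_mulv_le_rayleigh:
  assumes "sym_kernel n a" "psd_kernel n a" "0 \<le> l"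
    and rayleigh: "\<And>x. bilin n a x x \<le> l * sqnorm n x"
  shows "sqnorm n (mulv n a x) \<le> l * bilin n a x x"
proof -
  define w where "w = mulv n a x"
  define s where "s = sqnorm n w"
  have "s\<^sup>2 = (bilin n a x w)\<^sup>2" unfolding s_def w_def by (simp add: bilin_self_mulv[OF assms(1)])
  also have "\<dots> \<le> bilin n a x x * bilin n a w w" by (rule psd_kernel_cauchy_schwarz[OF assms(1,2)])
  also have "\<dots> \<le> bilin n a x x * (l * s)"
    unfolding s_def using rayleigh[of w] assms(2) unfolding psd_kernel_def by (intro mult_left_mono) auto
  finally have "s * s \<le> (l * bilin n a x x) * s" by (simp add: power2_eq_square algebra_simps)
  moreover have "0 \<le> l * bilin n a x x" using assms(2,3) unfolding psd_kernel_def by simp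
  moreover have "s \<ge> 0" unfolding s_def by (intro sum_nonneg) auto
  ultimately show ?thesis unfolding s_def w_def
    by (cases "s = 0") (auto simp: mult_le_cancel_right)
qed

lemma bilin_shift:
  "bilin n (\<lambda>i j. c * basis i j - a i j) x x = c * sqnorm n x - bilin n a x x"
proof -
  have row: "(\<Sum>j<n. x i * (c * basis i j - a i j) * x j) = c * (x i)\<^sup>2 - (\<Sum>j<n. x i * a i j * x j)"
    if "i < n" for i
  proof -
    have "(\<Sum>j<n. x i * (c * basis i j - a i j) * x j) =
        (\<Sum>j<n. (if j = i then c * x i * x j else 0) - x i * a i j * x j)"
      by (intro sum.cong) (auto simp: basis_def algebra_simps)
    also have "\<dots> = c * (x i)\<^sup>2 - (\<Sum>j<n. x i * a i j * x j)"
      using that by (simp add: sum_subtractf power2_eq_square)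
    finally show ?thesis .
  qed
  show ?thesis
    unfolding bilin_def by (simp add: row sum_subtractf sum_distrib_left)
qed

section \<open>Matrices as kernels\<close>

definition entries :: "real Matrix.mat \<Rightarrow> nat \<Rightarrow> nat \<Rightarrow> real" where
  "entries A i j = A $$ (i, j)"

lemma mult_mat_vec_nth_mulv:
  assumes "A \<in> carrier_mat n n" "x \<in> carrier_vec n" "i < n"
  shows "(A *\<^sub>v x) $ i = mulv n (entries A) (($) x) i"
  using assms unfolding mulv_def entries_def
  by (auto simp: mult_mat_vec_def scalar_prod_def atLeast0LessThan intro!: sum.cong)

lemma scalar_prod_sum: "w \<in> carrier_vec n \<Longrightarrow> scalar_prod x w = (\<Sum>i<n. x $ i * w $ i)"
  by (auto simp: scalar_prod_def atLeast0LessThan)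

lemma scalar_prod_self_sqnorm: "w \<in> carrier_vec n \<Longrightarrow> scalar_prod w w = sqnorm n (($) w)"
  by (simp add: scalar_prod_sum power2_eq_square)

lemma scalar_prod_mult_mat_vec_bilin:
  assumes "A \<in> carrier_mat n n" "x \<in> carrier_vec n" "w \<in> carrier_vec n"
  shows "scalar_prod x (A *\<^sub>v w) = bilin n (entries A) (($) x) (($) w)"
  using assms by (simp add: scalar_prod_sum[of _ n] bilin_mulv mulv_def entries_def)

lemma sym_kernel_entries:
  assumes "A \<in> carrier_mat n n" "transpose_mat A = A"
  shows "sym_kernel n (entries A)"
  unfolding sym_kernel_def entries_def using assms by (metis carrier_matD index_transpose_mat(1))

lemma psd_kernel_entries:
  assumes A: "A \<in> carrier_mat n n" and "psd_mat A"
  shows "psd_kernel n (entries A)"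
  unfolding psd_kernel_def
proof
  fix x :: "nat \<Rightarrow> real"
  have "bilin n (entries A) x x = bilin n (entries A) (($) (Matrix.vec n x)) (($) (Matrix.vec n x))"
    by (rule bilin_cong) auto
  also have "\<dots> = scalar_prod (Matrix.vec n x) (A *\<^sub>v Matrix.vec n x)"
    using scalar_prod_mult_mat_vec_bilin[OF A] by simp
  also have "\<dots> \<ge> 0" using assms unfolding psd_mat_def by auto
  finally show "0 \<le> bilin n (entries A) x x" .
qed

lemma sqnorm_vec_pos: "w \<in> carrier_vec n \<Longrightarrow> w \<noteq> 0\<^sub>v n \<Longrightarrow> sqnorm n (($) w) > 0"
proof -
  assume w: "w \<in> carrier_vec n" "w \<noteq> 0\<^sub>v n"
  have "sqnorm n (($) w) \<noteq> 0"
  proof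
    assume "sqnorm n (($) w) = 0"
    then have "\<forall>i\<in>{..<n}. (w $ i)\<^sup>2 = 0" by (subst sum_nonneg_eq_0_iff[symmetric]) auto
    then have "w = 0\<^sub>v n" using w(1) by (intro eq_vecI) auto
    then show False using w(2) by simp
  qed
  moreover have "sqnorm n (($) w) \<ge> 0" by (intro sum_nonneg) auto
  ultimately show ?thesis by simp
qed

section \<open>The largest eigenvalue as maximal Rayleigh quotient\<close>

definition rayleigh_max :: "nat \<Rightarrow> (nat \<Rightarrow> nat \<Rightarrow> real) \<Rightarrow> real" where
  "rayleigh_max n a = Sup {bilin n a x x | x. sqnorm n x = 1}"

lemma bilin_unit_le_abs_sum:
  assumes x: "sqnorm n x = 1"
  shows "bilin n a x x \<le> (\<Sum>i<n. \<Sum>j<n. \<bar>a i j\<bar>)"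
proof -
  have xi: "\<bar>x i\<bar> \<le> 1" if "i < n" for i
  proof -
    have "(x i)\<^sup>2 \<le> sqnorm n x" using that by (intro member_le_sum) auto
    then show ?thesis using x by (simp add: abs_square_le_1)
  qed
  have "bilin n a x x \<le> (\<Sum>i<n. \<Sum>j<n. \<bar>x i * a i j * x j\<bar>)" unfolding bilin_def
    by (intro sum_mono) (auto intro: order.trans[OF _ sum_mono] abs_ge_self)
  also have "\<dots> \<le> (\<Sum>i<n. \<Sum>j<n. \<bar>a i j\<bar>)"
  proof (intro sum_mono)
    fix i j assume "i \<in> {..<n}" "j \<in> {..<n}"
    then have "\<bar>x i\<bar> * \<bar>x j\<bar> * \<bar>a i j\<bar> \<le> 1 * 1 * \<bar>a i j\<bar>"
      using xi by (intro mult_right_mono mult_mono) auto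
    then show "\<bar>x i * a i j * x j\<bar> \<le> \<bar>a i j\<bar>" by (simp add: abs_mult algebra_simps)
  qed
  finally show ?thesis .
qed

lemma bilin_le_rayleigh_max:
  assumes "n > 0"
  shows "bilin n a x x \<le> rayleigh_max n a * sqnorm n x"
proof (cases "sqnorm n x = 0")
  case True
  then have "\<forall>i\<in>{..<n}. (x i)\<^sup>2 = 0" by (subst sum_nonneg_eq_0_iff[symmetric]) auto
  then have "bilin n a x x = bilin n a (\<lambda>_. 0) (\<lambda>_. 0)" by (intro bilin_cong) auto
  then show ?thesis using True by (simp add: bilin_def)
next
  case False
  define s where "s = sqnorm n x"
  have s: "s > 0" using False unfolding s_def by (simp add: order_neq_le_trans sum_nonneg)
  define y where "y i = (1 / sqrt s) * x i" for i
  have "sqnorm n y = 1" unfolding y_def using s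
    by (simp add: power_mult_distrib power_divide sum_divide_distrib[symmetric] s_def)
  then have "bilin n a y y \<le> rayleigh_max n a"
    unfolding rayleigh_max_def
    by (intro cSup_upper) (auto intro: bdd_aboveI[where M = "\<Sum>i<n. \<Sum>j<n. \<bar>a i j\<bar>"]
        bilin_unit_le_abs_sum)
  moreover have "bilin n a y y = bilin n a x x / s"
    unfolding y_def bilin_scale using s by (simp add: power_divide)
  ultimately show ?thesis using s unfolding s_def by (simp add: field_simps)
qed

lemma rayleigh_max_le:
  assumes "n > 0" and "\<And>x. sqnorm n x = 1 \<Longrightarrow> bilin n a x x \<le> c"
  shows "rayleigh_max n a \<le> c"
  unfolding rayleigh_max_def using assms sqnorm_basis[OF assms(1)] by (intro cSup_least) auto

lemma psd_coercive_if_left_invertible: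
  assumes B: "B \<in> carrier_mat n n" and B': "B' \<in> carrier_mat n n" "B' * B = 1\<^sub>m n"
    and B_b: "\<And>i j. i < n \<Longrightarrow> j < n \<Longrightarrow> B $$ (i, j) = b i j"
    and b: "sym_kernel n b" "psd_kernel n b"
  shows "\<exists>D>0. \<forall>x. sqnorm n x \<le> D * bilin n b x x"
proof -
  define K where "K = (\<Sum>i<n. \<Sum>j<n. (B' $$ (i, j))\<^sup>2)"
  define tr where "tr = (\<Sum>i<n. b i i)"
  have K: "K \<ge> 0" unfolding K_def by (intro sum_nonneg) auto
  have tr: "tr \<ge> 0" unfolding tr_def using psd_kernel_diag_nonneg[OF b(2)] by (intro sum_nonneg) auto
  have bound: "sqnorm n x \<le> K * tr * bilin n b x x" for x
  proof -
    define w where "w = B *\<^sub>v Matrix.vec n x"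
    have w: "w \<in> carrier_vec n" unfolding w_def using B by simp
    have wj: "w $ j = mulv n b x j" if "j < n" for j
      using that B unfolding w_def mulv_def by (auto simp: B_b scalar_prod_def atLeast0LessThan intro!: sum.cong)
    have "Matrix.vec n x = B' *\<^sub>v w" unfolding w_def using B B'
      by (simp add: assoc_mult_mat_vec[symmetric])
    then have xi: "x i = (\<Sum>j<n. B' $$ (i, j) * w $ j)" if "i < n" for i
    proof -
      have "x i = (B' *\<^sub>v w) $ i" using that by (metis \<open>Matrix.vec n x = B' *\<^sub>v w\<close> index_vec)
      then show ?thesis using that B' w by (simp add: mult_mat_vec_def scalar_prod_def atLeast0LessThan)
    qed
    have "sqnorm n x \<le> (\<Sum>i<n. (\<Sum>j<n. (B' $$ (i, j))\<^sup>2) * sqnorm n (($) w))"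
      by (intro sum_mono) (simp add: xi Cauchy_Schwarz_ineq_sum)
    also have "\<dots> = K * sqnorm n (mulv n b x)" unfolding K_def by (simp add: sum_distrib_right wj)
    also have "\<dots> \<le> K * (tr * bilin n b x x)"
      unfolding tr_def using K by (intro mult_left_mono sqnorm_mulv_le_trace[OF b]) auto
    finally show ?thesis by (simp add: mult.assoc)
  qed
  show ?thesis
  proof (intro exI conjI allI)
    fix x
    have "K * tr * bilin n b x x \<le> (K * tr + 1) * bilin n b x x"
      using b(2) unfolding psd_kernel_def by (simp add: distrib_right)
    then show "sqnorm n x \<le> (K * tr + 1) * bilin n b x x" using bound[of x] by linarith
  qed (use mult_nonneg_nonneg[OF K tr] in linarith)
qed

lemma rayleigh_max_eigenvalue:
  assumes A: "A \<in> carrier_mat n n" "transpose_mat A = A" and n: "n > 0"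
  shows "eigenvalue A (rayleigh_max n (entries A))"
proof (rule ccontr)
  define \<mu> where "\<mu> = rayleigh_max n (entries A)"
  define b where "b i j = \<mu> * basis i j - entries A i j" for i j
  have bilin_b: "bilin n b x x = \<mu> * sqnorm n x - bilin n (entries A) x x" for x
    unfolding b_def by (rule bilin_shift)
  assume "\<not> eigenvalue A (rayleigh_max n (entries A))"
  then have "Determinant.det (char_matrix A \<mu>) \<noteq> 0" unfolding \<mu>_def eigenvalue_det[OF A(1)] by simp
  from det_non_zero_imp_unit[OF _ this, of n "()"] A(1)
  obtain N where N: "N \<in> carrier_mat n n" "N * char_matrix A \<mu> = 1\<^sub>m n"
    unfolding Units_def by (auto simp: ring_mat_simps)
  have "\<exists>D>0. \<forall>x. sqnorm n x \<le> D * bilin n b x x"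
  proof (rule psd_coercive_if_left_invertible)
    show "- char_matrix A \<mu> \<in> carrier_mat n n" "- N \<in> carrier_mat n n" using A(1) N(1) by auto
    show "- N * - char_matrix A \<mu> = 1\<^sub>m n" 
    proof -
      have "char_matrix A \<mu> \<in> carrier_mat n n" using A(1) by simp
      then show ?thesis using N by (subst uminus_mult_left_mat) (auto simp: uminus_mult_right_mat)
    qed
    show "(- char_matrix A \<mu>) $$ (i, j) = b i j" if "i < n" "j < n" for i j
      using that A(1) by (auto simp: char_matrix_def b_def basis_def entries_def)
    show "sym_kernel n b"
      using sym_kernel_entries[OF A] unfolding sym_kernel_def b_def basis_def by auto
    show "psd_kernel n b"
      unfolding psd_kernel_def bilin_b \<mu>_def using bilin_le_rayleigh_max[OF n] by simp
  qed
  then obtain D where D: "D > 0" "\<And>x. sqnorm n x \<le> D * (\<mu> * sqnorm n x - bilin n (entries A) x x)"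
    unfolding bilin_b by blast
  have "\<mu> \<le> \<mu> - 1 / D" unfolding \<mu>_def
  proof (rule rayleigh_max_le[OF n])
    fix x assume "sqnorm n x = 1"
    then show "bilin n (entries A) x x \<le> rayleigh_max n (entries A) - 1 / D"
      using D(2)[of x] D(1) unfolding \<mu>_def by (simp add: field_simps)
  qed
  then show False using D(1) by simp
qed

lemma eigenvalue_le_rayleigh_max:
  assumes A: "A \<in> carrier_mat n n" and n: "n > 0" and "eigenvalue A k"
  shows "k \<le> rayleigh_max n (entries A)"
proof -
  from assms(3) obtain w where w: "w \<in> carrier_vec n" "w \<noteq> 0\<^sub>v n" "A *\<^sub>v w = k \<cdot>\<^sub>v w"
    unfolding eigenvalue_def eigenvector_def using A by auto
  have "k * sqnorm n (($) w) = scalar_prod w (A *\<^sub>v w)"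
    using w by (simp add: scalar_prod_sum[of _ n] power2_eq_square sum_distrib_left algebra_simps)
  also have "\<dots> \<le> rayleigh_max n (entries A) * sqnorm n (($) w)"
    using bilin_le_rayleigh_max[OF n] scalar_prod_mult_mat_vec_bilin[OF A w(1) w(1)] by simp
  finally show ?thesis using sqnorm_vec_pos[OF w(1,2)] by simp
qed

lemma lambda1_eq_rayleigh_max:
  assumes A: "A \<in> carrier_mat n n" "transpose_mat A = A" and n: "n > 0"
  shows "lambda1 A = rayleigh_max n (entries A)"
proof -
  have "char_poly A \<noteq> 0" using degree_monic_char_poly[OF A(1)] by auto
  then have "finite {k. poly (char_poly A) k = 0}" by (rule poly_roots_finite)
  then have "finite {k. eigenvalue A k}" using eigenvalue_root_char_poly[OF A(1)] by simp
  then show ?thesis unfolding lambda1_def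
    using eigenvalue_le_rayleigh_max[OF A(1) n] rayleigh_max_eigenvalue[OF A n] by (intro Max_eqI) auto
qed

lemma unit_eigenfunction:
  assumes A: "A \<in> carrier_mat n n" and "eigenvalue A k"
  obtains v where "sqnorm n v = 1" "\<And>i. i < n \<Longrightarrow> mulv n (entries A) v i = k * v i"
proof -
  from assms(2) obtain w where w: "w \<in> carrier_vec n" "w \<noteq> 0\<^sub>v n" "A *\<^sub>v w = k \<cdot>\<^sub>v w"
    unfolding eigenvalue_def eigenvector_def using A by auto
  define s where "s = sqnorm n (($) w)"
  have s: "s > 0" unfolding s_def by (rule sqnorm_vec_pos[OF w(1,2)])
  define v where "v i = (1 / sqrt s) * w $ i" for i
  have "sqnorm n v = 1" unfolding v_def using s
    by (simp add: power_mult_distrib power_divide sum_divide_distrib[symmetric] s_def)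
  moreover have "mulv n (entries A) v i = k * v i" if i: "i < n" for i
  proof -
    have "mulv n (entries A) v i = (1 / sqrt s) * mulv n (entries A) (($) w) i"
      unfolding v_def mulv_def by (simp add: sum_distrib_left algebra_simps)
    also have "mulv n (entries A) (($) w) i = k * w $ i"
      using mult_mat_vec_nth_mulv[OF A w(1) i] w(1,3) i by simp
    finally show ?thesis unfolding v_def by simp
  qed
  ultimately show ?thesis by (rule that)
qed

section \<open>A single run of Algorithm E\<close>

lemma scalar_prod_mult_mat_vec_commute:
  fixes A :: "real Matrix.mat"
  assumes A: "A \<in> carrier_mat n n" "transpose_mat A = A" and "z \<in> carrier_vec n" "w \<in> carrier_vec n"
  shows "scalar_prod z (A *\<^sub>v w) = scalar_prod w (A *\<^sub>v z)"
  using bilin_commute[OF sym_kernel_entries[OF A]] scalar_prod_mult_mat_vec_bilin[OF A(1)] assms(3,4)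
  by simp

lemma psd_mat_cauchy_schwarz:
  assumes A: "A \<in> carrier_mat n n" "transpose_mat A = A" "psd_mat A"
    and z: "z \<in> carrier_vec n" "w \<in> carrier_vec n"
  shows "(scalar_prod z (A *\<^sub>v w))\<^sup>2 \<le> scalar_prod z (A *\<^sub>v z) * scalar_prod w (A *\<^sub>v w)"
  using psd_kernel_cauchy_schwarz[OF sym_kernel_entries[OF A(1,2)] psd_kernel_entries[OF A(1,3)]]
    scalar_prod_mult_mat_vec_bilin[OF A(1)] z by simp

lemma psd_mat_quadratic_pos_if_image_nonzero:
  assumes A: "A \<in> carrier_mat n n" "transpose_mat A = A" "psd_mat A" and z: "z \<in> carrier_vec n"
    and image: "scalar_prod (A *\<^sub>v z) (A *\<^sub>v z) > 0"
  shows "scalar_prod z (A *\<^sub>v z) > 0"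
proof -
  have Az: "A *\<^sub>v z \<in> carrier_vec n" using A z by simp
  have "(scalar_prod (A *\<^sub>v z) (A *\<^sub>v z))\<^sup>2 \<le> scalar_prod z (A *\<^sub>v z) * scalar_prod (A *\<^sub>v z) (A *\<^sub>v (A *\<^sub>v z))"
    using psd_mat_cauchy_schwarz[OF A z Az] scalar_prod_mult_mat_vec_commute[OF A(1,2) z Az] by simp
  then have "scalar_prod z (A *\<^sub>v z) \<noteq> 0" using image by auto
  then show ?thesis using A z unfolding psd_mat_def by force
qed

text \<open>The ratio maximised by Algorithm E bounds the Rayleigh quotient of the returned direction
  \<open>A z\<close> from below: this is Cauchy-Schwarz for the form of \<open>A\<close>, applied to \<open>z\<close> and \<open>A z\<close>.\<close>
lemma rayleigh_image_ge:
  assumes A: "A \<in> carrier_mat n n" "transpose_mat A = A" "psd_mat A" and z: "z \<in> carrier_vec n"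
    and pos: "scalar_prod z (A *\<^sub>v z) > 0"
  shows "scalar_prod (A *\<^sub>v z) (A *\<^sub>v z) / scalar_prod z (A *\<^sub>v z) \<le>
    scalar_prod (A *\<^sub>v z) (A *\<^sub>v (A *\<^sub>v z)) / scalar_prod (A *\<^sub>v z) (A *\<^sub>v z)"
proof (cases "scalar_prod (A *\<^sub>v z) (A *\<^sub>v z) = 0")
  case False
  define w where "w = A *\<^sub>v z"
  have w: "w \<in> carrier_vec n" unfolding w_def using A z by simp
  have "scalar_prod w w \<ge> 0" using scalar_prod_self_sqnorm[OF w] by (simp add: sum_nonneg)
  then have ww: "scalar_prod w w > 0" using False unfolding w_def by simp
  have "(scalar_prod w w)\<^sup>2 \<le> scalar_prod z (A *\<^sub>v z) * scalar_prod w (A *\<^sub>v w)"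
    using psd_mat_cauchy_schwarz[OF A z w] scalar_prod_mult_mat_vec_commute[OF A(1,2) z w]
    unfolding w_def by simp
  then show ?thesis using ww pos unfolding w_def[symmetric] by (simp add: field_simps power2_eq_square)
qed simp

lemma scalar_prod_transpose_sandwich:
  fixes M :: "real Matrix.mat"
  assumes "S \<in> carrier_mat n m" "M \<in> carrier_mat n n" "x \<in> carrier_vec m"
  shows "scalar_prod x ((transpose_mat S * M * S) *\<^sub>v x) = scalar_prod (S *\<^sub>v x) (M *\<^sub>v (S *\<^sub>v x))"
proof -
  have "(transpose_mat S * M * S) *\<^sub>v x = (transpose_mat S * M) *\<^sub>v (S *\<^sub>v x)"
    using assms by (intro assoc_mult_mat_vec) auto
  also have "\<dots> = transpose_mat S *\<^sub>v (M *\<^sub>v (S *\<^sub>v x))"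
    using assms by (intro assoc_mult_mat_vec) auto
  finally have "(transpose_mat S * M * S) *\<^sub>v x = transpose_mat S *\<^sub>v (M *\<^sub>v (S *\<^sub>v x))" .
  then show ?thesis using assms
    by (simp add: comm_scalar_prod[of x m] transpose_vec_mult_scalar comm_scalar_prod[of _ n])
qed

lemma scalar_prod_gram:
  fixes B :: "real Matrix.mat"
  assumes "B \<in> carrier_mat n m" "x \<in> carrier_vec m"
  shows "scalar_prod x ((transpose_mat B * B) *\<^sub>v x) = scalar_prod (B *\<^sub>v x) (B *\<^sub>v x)"
  using assms by (simp add: assoc_mult_mat_vec comm_scalar_prod[of x m] transpose_vec_mult_scalar)

lemma sum_nth_distinct:
  "distinct xs \<Longrightarrow> (\<Sum>k<length xs. f (xs ! k)) = sum f (set xs)"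
  by (simp add: sum_list_sum_nth atLeast0LessThan flip: sum_list_distinct_conv_sum_set)

lemma sel_mat_carrier: "sel_mat n T \<in> carrier_mat n (card T)"
  unfolding sel_mat_def by simp

lemma sel_mat_mult_restriction:
  fixes y :: "real Matrix.vec"
  assumes T: "T \<subseteq> {..<n}" and y: "y \<in> carrier_vec n" and supp: "\<And>i. i < n \<Longrightarrow> i \<notin> T \<Longrightarrow> y $ i = 0"
  shows "sel_mat n T *\<^sub>v Matrix.vec (card T) (\<lambda>k. y $ (sorted_list_of_set T ! k)) = y"
proof (rule eq_vecI)
  fix i assume "i < dim_vec y"
  then have i: "i < n" using y by simp
  have fin: "finite T" using T finite_subset by blast
  define xs where "xs = sorted_list_of_set T"
  have xs: "distinct xs" "set xs = T" "length xs = card T" unfolding xs_def using fin by auto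
  have "(sel_mat n T *\<^sub>v Matrix.vec (card T) (\<lambda>k. y $ (xs ! k))) $ i =
      (\<Sum>k<length xs. (\<lambda>t. if t = i then y $ t else 0) (xs ! k))"
    using i xs(3) unfolding sel_mat_def xs_def
    by (auto simp: mult_mat_vec_def scalar_prod_def atLeast0LessThan intro!: sum.cong)
  also have "\<dots> = (\<Sum>t\<in>T. if t = i then y $ t else 0)"
    using sum_nth_distinct[OF xs(1)] xs(2) by simp
  also have "\<dots> = y $ i" using fin i supp by (simp add: sum.delta)
  finally show "(sel_mat n T *\<^sub>v Matrix.vec (card T) (\<lambda>k. y $ (sorted_list_of_set T ! k))) $ i = y $ i"
    unfolding xs_def .
qed (use y in \<open>simp add: sel_mat_def\<close>)

lemma mat_nonzero_if_quadratic_pos: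
  fixes B :: "real Matrix.mat"
  assumes x: "x \<in> carrier_vec m" and pos: "scalar_prod x (B *\<^sub>v x) > 0"
  shows "B \<noteq> 0\<^sub>m m m"
proof
  assume "B = 0\<^sub>m m m"
  then have "B *\<^sub>v x = 0\<^sub>v m" using x by (intro eq_vecI) (auto simp: scalar_prod_def)
  then show False using x pos by simp
qed

lemma rayleigh_normalized:
  fixes A :: "real Matrix.mat"
  assumes "A \<in> carrier_mat n n" "w \<in> carrier_vec n"
  shows "scalar_prod ((1 / vnorm w) \<cdot>\<^sub>v w) (A *\<^sub>v ((1 / vnorm w) \<cdot>\<^sub>v w)) =
    scalar_prod w (A *\<^sub>v w) / scalar_prod w w"
proof -
  have "(vnorm w)\<^sup>2 = scalar_prod w w"
    unfolding vnorm_def using scalar_prod_self_sqnorm[OF assms(2)] by (simp add: sum_nonneg)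
  then show ?thesis using assms by (simp add: mult_mat_vec power2_eq_square)
qed

text \<open>The sample vector \<open>y\<close> competes in the maximisation, so the maximiser's ratio exceeds \<open>\<mu>\<close>,
  and the output's Rayleigh quotient exceeds that ratio.\<close>
lemma algE_output_ge:
  fixes A :: "real Matrix.mat" and y :: "real Matrix.vec"
  assumes A: "A \<in> carrier_mat n n" "transpose_mat A = A" "psd_mat A" and T: "T \<subseteq> {..<n}"
    and y: "y \<in> carrier_vec n" "\<And>i. i < n \<Longrightarrow> i \<notin> T \<Longrightarrow> y $ i = 0"
    and \<mu>: "\<mu> \<ge> 0" and ratio_y: "scalar_prod (A *\<^sub>v y) (A *\<^sub>v y) > \<mu> * scalar_prod y (A *\<^sub>v y)"
    and u: "u \<in> algE_outputs A T"
  shows "scalar_prod u (A *\<^sub>v u) \<ge> \<mu>"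
proof -
  define m where "m = card T"
  define S where "S = sel_mat n T"
  have S: "S \<in> carrier_mat n m" unfolding S_def m_def by (rule sel_mat_carrier)
  define B where "B = transpose_mat S * A * S"
  define C where "C = transpose_mat (A * S) * (A * S)"
  define ratio where "ratio x = scalar_prod x (C *\<^sub>v x) / scalar_prod x (B *\<^sub>v x)" for x
  have B: "scalar_prod x (B *\<^sub>v x) = scalar_prod (S *\<^sub>v x) (A *\<^sub>v (S *\<^sub>v x))"
    and C: "scalar_prod x (C *\<^sub>v x) = scalar_prod (A *\<^sub>v (S *\<^sub>v x)) (A *\<^sub>v (S *\<^sub>v x))"
    if "x \<in> carrier_vec m" for x
    using scalar_prod_transpose_sandwich[OF S A(1) that] scalar_prod_gram[of "A * S" n m x] S A that
    unfolding B_def C_def by (auto simp: assoc_mult_mat_vec)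
  define x0 where "x0 = Matrix.vec m (\<lambda>k. y $ (sorted_list_of_set T ! k))"
  have x0: "x0 \<in> carrier_vec m" and Sx0: "S *\<^sub>v x0 = y"
    unfolding x0_def S_def m_def using sel_mat_mult_restriction[OF T y] by auto
  have y_pos: "scalar_prod y (A *\<^sub>v y) > 0"
  proof (rule psd_mat_quadratic_pos_if_image_nonzero[OF A y(1)])
    show "scalar_prod (A *\<^sub>v y) (A *\<^sub>v y) > 0"
      using ratio_y mult_nonneg_nonneg[OF \<mu>] A y(1) unfolding psd_mat_def by force
  qed
  have Bx0: "scalar_prod x0 (B *\<^sub>v x0) > 0" using y_pos B[OF x0] Sx0 by simp
  with u mat_nonzero_if_quadratic_pos[OF x0] obtain x where x: "x \<in> carrier_vec m" "scalar_prod x (B *\<^sub>v x) > 0"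
    and x_max: "\<forall>x'\<in>carrier_vec m. scalar_prod x' (B *\<^sub>v x') > 0 \<longrightarrow> ratio x' \<le> ratio x"
    and u_def: "u = (1 / vnorm (A * S *\<^sub>v x)) \<cdot>\<^sub>v (A * S *\<^sub>v x)"
    using A(1) unfolding algE_outputs_def Let_def carrier_matD(1)[OF A(1)] m_def[symmetric]
      S_def[symmetric] B_def[symmetric] C_def[symmetric] by (auto simp: ratio_def)
  define z where "z = S *\<^sub>v x"
  have z: "z \<in> carrier_vec n" unfolding z_def using S x by simp
  have ASx: "A * S *\<^sub>v x = A *\<^sub>v z" unfolding z_def using A S x by (simp add: assoc_mult_mat_vec)
  have "\<mu> < ratio x0" unfolding ratio_def using ratio_y y_pos B[OF x0] C[OF x0] Sx0 by (simp add: field_simps)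
  also have "\<dots> \<le> ratio x" using x_max x0 Bx0 by blast
  also have "ratio x = scalar_prod (A *\<^sub>v z) (A *\<^sub>v z) / scalar_prod z (A *\<^sub>v z)"
    unfolding ratio_def B[OF x(1)] C[OF x(1)] z_def ..
  also have "\<dots> \<le> scalar_prod u (A *\<^sub>v u)"
    unfolding u_def ASx rayleigh_normalized[OF A(1) mult_mat_vec_carrier[OF A(1) z]]
    using rayleigh_image_ge[OF A z] x(2) B[OF x(1)] unfolding z_def by simp
  finally show ?thesis by simp
qed

lemma algE_outputs_carrier:
  assumes "u \<in> algE_outputs A T"
  shows "u \<in> carrier_vec (dim_row A)"
proof -
  define S where "S = sel_mat (dim_row A) T"
  show ?thesis
  proof (cases "transpose_mat S * A * S = 0\<^sub>m (card T) (card T)")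
    case True
    then show ?thesis using assms unfolding algE_outputs_def Let_def S_def[symmetric] by simp
  next
    case False
    then obtain x where "u = (1 / vnorm (A * S *\<^sub>v x)) \<cdot>\<^sub>v (A * S *\<^sub>v x)"
      using assms unfolding algE_outputs_def Let_def S_def[symmetric] by (simp only: if_False) blast
    then show ?thesis unfolding carrier_vec_def by simp
  qed
qed

lemma algE_outputs_nonneg:
  "psd_mat A \<Longrightarrow> u \<in> algE_outputs A T \<Longrightarrow> scalar_prod u (A *\<^sub>v u) \<ge> 0"
  using algE_outputs_carrier unfolding psd_mat_def by blast

lemma algE_outputs_dim0:
  fixes A :: "real Matrix.mat"
  assumes A: "A \<in> carrier_mat 0 0"
  shows "algE_outputs A T = {}"
proof -
  have S: "sel_mat 0 T \<in> carrier_mat 0 (card T)" by (rule sel_mat_carrier)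
  define B where "B = transpose_mat (sel_mat 0 T) * A * sel_mat 0 T"
  have "scalar_prod x (B *\<^sub>v x) = 0" if "x \<in> carrier_vec (card T)" for x
    unfolding B_def using scalar_prod_transpose_sandwich[OF S A that] S A that by (simp add: scalar_prod_def)
  then have no_pos: "\<not> (x \<in> carrier_vec (card T) \<and> scalar_prod x (B *\<^sub>v x) > 0)" for x by auto
  have no_unit: "\<not> (u \<in> carrier_vec 0 \<and> vnorm u = 1)" for u :: "real Matrix.vec"
    by (simp add: vnorm_def scalar_prod_def)
  show ?thesis
    unfolding algE_outputs_def Let_def carrier_matD(1)[OF A] B_def[symmetric] using no_pos no_unit by auto
qed

section \<open>Bernoulli sampling\<close>

lemma sum_sum_delta:
  fixes n :: nat
  assumes "i < n" "j < n"
  shows "(\<Sum>k<n. \<Sum>l<n. if k = i \<and> l = j then c else 0) = (c :: real)"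
proof -
  have "(\<Sum>k<n. \<Sum>l<n. if k = i \<and> l = j then c else 0) = (\<Sum>k<n. if k = i then c else 0)"
    using assms by (intro sum.cong refl) (auto simp: sum.delta)
  also have "\<dots> = c" using assms by simp
  finally show ?thesis .
qed

lemma prod_pow_of_bool_eq: "t < (n :: nat) \<Longrightarrow> (\<Prod>m<n. (x m :: real) ^ of_bool (m = t)) = x t"
proof -
  assume "t < n"
  have "(\<Prod>m<n. x m ^ of_bool (m = t)) = (\<Prod>m<n. if m = t then x m else 1)"
    by (intro prod.cong) auto
  also have "\<dots> = x t" using \<open>t < n\<close> by (subst prod.delta) auto
  finally show ?thesis .
qed

locale bernoulli_sample =
  fixes n :: nat and p :: real
  assumes p_nonneg: "0 \<le> p" and p_le_1: "p \<le> 1"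
begin

definition P :: "(nat \<Rightarrow> bool) pmf" where
  "P = Pi_pmf {..<n} False (\<lambda>_. bernoulli_pmf p)"

lemma finite_set_pmf_P: "finite (set_pmf P)"
proof -
  have "set_pmf P \<subseteq> {f. \<forall>x. x \<notin> {..<n} \<longrightarrow> f x = False}"
    unfolding P_def by (rule set_Pi_pmf_subset) simp
  also have "\<dots> \<subseteq> (\<lambda>S x. x \<in> S) ` Pow {..<n}"
  proof
    fix f assume "f \<in> {f. \<forall>x. x \<notin> {..<n} \<longrightarrow> f x = False}"
    then have "f = (\<lambda>x. x \<in> {x. f x})" "{x. f x} \<in> Pow {..<n}" by auto
    then show "f \<in> (\<lambda>S x. x \<in> S) ` Pow {..<n}" by blast
  qed
  finally show ?thesis by (rule finite_subset) auto
qed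

lemma integrable_P [simp, intro]: "integrable (measure_pmf P) (g :: _ \<Rightarrow> real)"
  by (rule integrable_measure_pmf_finite[OF finite_set_pmf_P])

lemma expectation_sum:
  "measure_pmf.expectation P (\<lambda>f. \<Sum>i\<in>I. g i f) = (\<Sum>i\<in>I. measure_pmf.expectation P (g i :: _ \<Rightarrow> real))"
  by (rule Bochner_Integration.integral_sum) auto

lemma expectation_component:
  "m < n \<Longrightarrow> measure_pmf.expectation P (\<lambda>f. g (f m)) = g True * p + g False * (1 - p)"
proof -
  assume m: "m < n"
  have "map_pmf (\<lambda>f. f m) P = bernoulli_pmf p" unfolding P_def using m by (simp add: Pi_pmf_component)
  then have "measure_pmf.expectation P (\<lambda>f. g (f m)) = measure_pmf.expectation (bernoulli_pmf p) g"
    by (metis integral_map_pmf)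
  then show ?thesis using p_nonneg p_le_1 by simp
qed

lemma expectation_indicator: "i < n \<Longrightarrow> measure_pmf.expectation P (\<lambda>f. of_bool (f i)) = p"
  using expectation_component[of i "\<lambda>b. of_bool b"] by simp

lemma expectation_prod:
  fixes g :: "nat \<Rightarrow> bool \<Rightarrow> real"
  shows "measure_pmf.expectation P (\<lambda>f. \<Prod>m<n. g m (f m)) = (\<Prod>m<n. g m True * p + g m False * (1 - p))"
proof -
  have "prob_space.indep_vars (measure_pmf P) (\<lambda>_. count_space UNIV) (\<lambda>x f. f x) {..<n}"
    unfolding P_def by (rule indep_vars_Pi_pmf) simp
  then have "prob_space.indep_vars (measure_pmf P) (\<lambda>_. borel) (\<lambda>m f. g m (f m)) {..<n}"
    by (rule prob_space.indep_vars_compose2[OF measure_pmf.prob_space_axioms]) auto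
  then have "measure_pmf.expectation P (\<lambda>f. \<Prod>m<n. g m (f m)) =
      (\<Prod>m<n. measure_pmf.expectation P (\<lambda>f. g m (f m)))"
    by (intro prob_space.indep_vars_lebesgue_integral[OF measure_pmf.prob_space_axioms]) auto
  also have "\<dots> = (\<Prod>m<n. g m True * p + g m False * (1 - p))"
    by (intro prod.cong) (auto simp: expectation_component)
  finally show ?thesis .
qed

lemma prob_ge_le_expectation:
  assumes "\<And>f. Z f \<ge> 0" and "t > 0"
  shows "measure_pmf.prob P {f. Z f \<ge> t} \<le> measure_pmf.expectation P Z / t"
  using integral_Markov_inequality_measure[of "measure_pmf P" Z UNIV t] assms by simp

definition dev :: "(nat \<Rightarrow> bool) \<Rightarrow> nat \<Rightarrow> real" where
  "dev f i = of_bool (f i) - p"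

definition cmoment :: "nat \<Rightarrow> real" where
  "cmoment k = (1 - p) ^ k * p + (- p) ^ k * (1 - p)"

lemma cmoment_simps: "cmoment 0 = 1" "cmoment (Suc 0) = 0" "cmoment (Suc (Suc 0)) = p * (1 - p)"
  unfolding cmoment_def by (simp_all add: algebra_simps)

lemma expectation_prod_dev_power:
  "measure_pmf.expectation P (\<lambda>f. \<Prod>m<n. (dev f m) ^ (c m)) = (\<Prod>m<n. cmoment (c m))"
  using expectation_prod[of "\<lambda>m b. (of_bool b - p) ^ (c m)"] unfolding dev_def cmoment_def by simp

lemma expectation_dev_mult:
  assumes "i < n" "k < n"
  shows "measure_pmf.expectation P (\<lambda>f. dev f i * dev f k) = (if i = k then p * (1 - p) else 0)"
proof -
  define c :: "nat \<Rightarrow> nat" where "c m = of_bool (m = i) + of_bool (m = k)" for m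
  have "measure_pmf.expectation P (\<lambda>f. dev f i * dev f k) = (\<Prod>m<n. cmoment (c m))"
    using expectation_prod_dev_power[of c] assms
    by (simp add: c_def power_add prod.distrib prod_pow_of_bool_eq)
  also have "\<dots> = (if i = k then p * (1 - p) else 0)"
  proof (cases "i = k")
    case True
    have "(\<Prod>m<n. cmoment (c m)) = (\<Prod>m<n. if m = i then p * (1 - p) else 1)"
      using True by (intro prod.cong) (auto simp: c_def cmoment_simps)
    then show ?thesis using True assms by (simp add: prod.delta)
  next
    case False
    then have "(\<Prod>m<n. cmoment (c m)) = 0"
      using assms by (intro prod_zero bexI[of _ i]) (auto simp: c_def cmoment_simps)
    then show ?thesis using False by simp
  qed
  finally show ?thesis .
qed

lemma expectation_dev_mult4:
  assumes "i < n" "j < n" "k < n" "l < n" "i \<noteq> j" "k \<noteq> l"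
  shows "measure_pmf.expectation P (\<lambda>f. dev f i * dev f j * dev f k * dev f l) =
    (if (k = i \<and> l = j) \<or> (k = j \<and> l = i) then (p * (1 - p))\<^sup>2 else 0)"
proof -
  define c :: "nat \<Rightarrow> nat" where
    "c m = of_bool (m = i) + of_bool (m = j) + of_bool (m = k) + of_bool (m = l)" for m
  have "measure_pmf.expectation P (\<lambda>f. dev f i * dev f j * dev f k * dev f l) = (\<Prod>m<n. cmoment (c m))"
    using expectation_prod_dev_power[of c] assms(1-4)
    by (simp add: c_def power_add prod.distrib prod_pow_of_bool_eq)
  also have "\<dots> = (if (k = i \<and> l = j) \<or> (k = j \<and> l = i) then (p * (1 - p))\<^sup>2 else 0)"
  proof (cases "(k = i \<and> l = j) \<or> (k = j \<and> l = i)")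
    case True
    have "(\<Prod>m<n. cmoment (c m)) = (\<Prod>m<n. if m \<in> {i, j} then p * (1 - p) else 1)"
      using True assms(5) by (intro prod.cong) (auto simp: c_def cmoment_simps)
    also have "\<dots> = (\<Prod>m\<in>{..<n} \<inter> {i, j}. p * (1 - p))"
      by (simp add: prod.If_cases Int_def)
    also have "{..<n} \<inter> {i, j} = {i, j}" using assms by auto
    finally show ?thesis using True assms(5) by (simp add: power2_eq_square)
  next
    case False
    \<comment> \<open>some index occurs exactly once, and the centred variable has mean zero\<close>
    have "\<exists>m0\<in>{k, l}. m0 \<notin> {i, j}" using False assms(6) by auto
    then obtain m0 where "m0 \<in> {k, l}" "m0 \<notin> {i, j}" by blast
    then have "m0 < n" "c m0 = 1" using assms(3,4,6) by (auto simp: c_def)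
    then have "(\<Prod>m<n. cmoment (c m)) = 0" by (intro prod_zero bexI[of _ m0]) (auto simp: cmoment_simps)
    then show ?thesis unfolding if_not_P[OF False] .
  qed
  finally show ?thesis .
qed

lemma expectation_linear_sq:
  "measure_pmf.expectation P (\<lambda>f. (\<Sum>i<n. s i * dev f i)\<^sup>2) = p * (1 - p) * sqnorm n s"
proof -
  have "(\<lambda>f. (\<Sum>i<n. s i * dev f i)\<^sup>2) = (\<lambda>f. \<Sum>i<n. \<Sum>k<n. (s i * s k) * (dev f i * dev f k))"
    by (auto simp: power2_eq_square sum_product algebra_simps)
  then have "measure_pmf.expectation P (\<lambda>f. (\<Sum>i<n. s i * dev f i)\<^sup>2) =
      (\<Sum>i<n. \<Sum>k<n. (s i * s k) * measure_pmf.expectation P (\<lambda>f. dev f i * dev f k))"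
    by (simp add: expectation_sum)
  also have "\<dots> = (\<Sum>i<n. \<Sum>k<n. if k = i then p * (1 - p) * (s i)\<^sup>2 else 0)"
    by (intro sum.cong refl) (auto simp: expectation_dev_mult power2_eq_square)
  also have "\<dots> = p * (1 - p) * sqnorm n s" by (simp add: sum_distrib_left)
  finally show ?thesis .
qed

lemma expectation_chaos_sq:
  assumes diag: "\<And>i. b i i = 0" and sym: "\<And>i j. i < n \<Longrightarrow> j < n \<Longrightarrow> b i j = b j i"
  shows "measure_pmf.expectation P (\<lambda>f. (\<Sum>i<n. \<Sum>j<n. b i j * dev f i * dev f j)\<^sup>2) =
    2 * (p * (1 - p))\<^sup>2 * (\<Sum>i<n. \<Sum>j<n. (b i j)\<^sup>2)"
proof -
  define q where "q = (p * (1 - p))\<^sup>2"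
  define E4 where "E4 i j k l = measure_pmf.expectation P (\<lambda>f. dev f i * dev f j * dev f k * dev f l)"
    for i j k l
  have sq: "(\<Sum>i<n. \<Sum>j<n. X i j)\<^sup>2 = (\<Sum>i<n. \<Sum>j<n. \<Sum>k<n. \<Sum>l<n. X i j * X k l)"
    for X :: "nat \<Rightarrow> nat \<Rightarrow> real"
    by (simp only: power2_eq_square sum_distrib_right) (simp only: sum_distrib_left)
  have "measure_pmf.expectation P (\<lambda>f. (\<Sum>i<n. \<Sum>j<n. b i j * dev f i * dev f j)\<^sup>2) =
      (\<Sum>i<n. \<Sum>j<n. \<Sum>k<n. \<Sum>l<n. (b i j * b k l) * E4 i j k l)"
    unfolding sq E4_def by (simp add: expectation_sum algebra_simps)
  also have "\<dots> = (\<Sum>i<n. \<Sum>j<n. 2 * q * (b i j)\<^sup>2)"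
  proof (intro sum.cong refl)
    fix i j assume i: "i \<in> {..<n}" and j: "j \<in> {..<n}"
    show "(\<Sum>k<n. \<Sum>l<n. (b i j * b k l) * E4 i j k l) = 2 * q * (b i j)\<^sup>2"
    proof (cases "i = j")
      case False
      have "(\<Sum>k<n. \<Sum>l<n. (b i j * b k l) * E4 i j k l) =
          (\<Sum>k<n. \<Sum>l<n. (if k = i \<and> l = j then b i j * b i j * q else 0) +
            (if k = j \<and> l = i then b i j * b j i * q else 0))"
      proof (intro sum.cong refl)
        fix k l assume "k \<in> {..<n}" "l \<in> {..<n}"
        then show "(b i j * b k l) * E4 i j k l = (if k = i \<and> l = j then b i j * b i j * q else 0) +
            (if k = j \<and> l = i then b i j * b j i * q else 0)"
          using i j False diag unfolding E4_def q_def
          by (cases "k = l") (auto simp: expectation_dev_mult4)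
      qed
      also have "\<dots> = b i j * b i j * q + b i j * b j i * q"
        using i j by (simp only: sum.distrib sum_sum_delta lessThan_iff)
      also have "\<dots> = 2 * q * (b i j)\<^sup>2" using sym i j by (simp add: power2_eq_square)
      finally show ?thesis .
    qed (simp add: diag)
  qed
  also have "\<dots> = 2 * q * (\<Sum>i<n. \<Sum>j<n. (b i j)\<^sup>2)" by (simp add: sum_distrib_left)
  finally show ?thesis unfolding q_def .
qed

lemma indicator_quadratic_decomp:
  assumes sym: "\<And>i j. i < n \<Longrightarrow> j < n \<Longrightarrow> b i j = b j i"
  shows "(\<Sum>i<n. \<Sum>j<n. b i j * of_bool (f i) * of_bool (f j)) - p\<^sup>2 * (\<Sum>i<n. \<Sum>j<n. b i j) =
    2 * p * (\<Sum>i<n. (\<Sum>j<n. b i j) * dev f i) + (\<Sum>i<n. \<Sum>j<n. b i j * dev f i * dev f j)"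
proof -
  have ind: "of_bool (f i) = p + dev f i" for i unfolding dev_def by simp
  have swap: "(\<Sum>i<n. \<Sum>j<n. b i j * dev f j) = (\<Sum>i<n. \<Sum>j<n. b i j * dev f i)"
    by (subst sum.swap) (intro sum.cong refl, simp add: sym)
  have "(\<Sum>i<n. \<Sum>j<n. b i j * of_bool (f i) * of_bool (f j)) =
      (\<Sum>i<n. \<Sum>j<n. p\<^sup>2 * b i j + p * (b i j * dev f i) + p * (b i j * dev f j) + b i j * dev f i * dev f j)"
    unfolding ind by (intro sum.cong refl) (simp add: algebra_simps power2_eq_square)
  also have "\<dots> = p\<^sup>2 * (\<Sum>i<n. \<Sum>j<n. b i j) + p * (\<Sum>i<n. \<Sum>j<n. b i j * dev f i)
      + p * (\<Sum>i<n. \<Sum>j<n. b i j * dev f j) + (\<Sum>i<n. \<Sum>j<n. b i j * dev f i * dev f j)"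
    by (simp add: sum.distrib sum_distrib_left)
  also have "\<dots> = p\<^sup>2 * (\<Sum>i<n. \<Sum>j<n. b i j) + 2 * p * (\<Sum>i<n. (\<Sum>j<n. b i j) * dev f i)
      + (\<Sum>i<n. \<Sum>j<n. b i j * dev f i * dev f j)"
    unfolding swap by (simp add: sum_distrib_right)
  finally show ?thesis by linarith
qed

text \<open>Chebyshev's inequality for a quadratic form in the indicators, through the decomposition into
  a linear part and a mean-zero chaos, using \<open>(X + Y)\<^sup>2 \<le> 2 X\<^sup>2 + 2 Y\<^sup>2\<close>.\<close>
lemma indicator_quadratic_tail:
  assumes diag: "\<And>i. b i i = 0" and sym: "\<And>i j. i < n \<Longrightarrow> j < n \<Longrightarrow> b i j = b j i" and t: "t > 0"
  shows "measure_pmf.prob P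
      {f. ((\<Sum>i<n. \<Sum>j<n. b i j * of_bool (f i) * of_bool (f j)) - p\<^sup>2 * (\<Sum>i<n. \<Sum>j<n. b i j))\<^sup>2 \<ge> t}
    \<le> (8 * p\<^sup>2 * (p * (1 - p)) * sqnorm n (\<lambda>i. \<Sum>j<n. b i j) +
        4 * (p * (1 - p))\<^sup>2 * (\<Sum>i<n. \<Sum>j<n. (b i j)\<^sup>2)) / t"
proof -
  define X where "X f = (\<Sum>i<n. (\<Sum>j<n. b i j) * dev f i)" for f
  define Y where "Y f = (\<Sum>i<n. \<Sum>j<n. b i j * dev f i * dev f j)" for f
  define Z where "Z f = 8 * p\<^sup>2 * (X f)\<^sup>2 + 2 * (Y f)\<^sup>2" for f
  have le: "((\<Sum>i<n. \<Sum>j<n. b i j * of_bool (f i) * of_bool (f j)) - p\<^sup>2 * (\<Sum>i<n. \<Sum>j<n. b i j))\<^sup>2 \<le> Z f"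
    for f
  proof -
    have "((\<Sum>i<n. \<Sum>j<n. b i j * of_bool (f i) * of_bool (f j)) - p\<^sup>2 * (\<Sum>i<n. \<Sum>j<n. b i j))\<^sup>2 =
        (2 * p * X f + Y f)\<^sup>2"
      unfolding X_def Y_def by (rule arg_cong[where f = "\<lambda>z. z\<^sup>2"], rule indicator_quadratic_decomp[OF sym])
    also have "\<dots> \<le> Z f" unfolding Z_def
      using zero_le_power2[of "2 * p * X f - Y f"] by (simp add: power2_eq_square algebra_simps)
    finally show ?thesis .
  qed
  have "measure_pmf.prob P
      {f. ((\<Sum>i<n. \<Sum>j<n. b i j * of_bool (f i) * of_bool (f j)) - p\<^sup>2 * (\<Sum>i<n. \<Sum>j<n. b i j))\<^sup>2 \<ge> t}
      \<le> measure_pmf.prob P {f. Z f \<ge> t}"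
    by (rule measure_pmf.finite_measure_mono) (use le order_trans in auto)
  also have "\<dots> \<le> measure_pmf.expectation P Z / t"
    by (rule prob_ge_le_expectation[OF _ t]) (simp add: Z_def)
  also have "measure_pmf.expectation P Z = 8 * p\<^sup>2 * (p * (1 - p) * sqnorm n (\<lambda>i. \<Sum>j<n. b i j)) +
      2 * (2 * (p * (1 - p))\<^sup>2 * (\<Sum>i<n. \<Sum>j<n. (b i j)\<^sup>2))"
    unfolding Z_def X_def Y_def by (simp add: expectation_linear_sq expectation_chaos_sq[OF diag sym])
  finally show ?thesis by (simp add: algebra_simps)
qed

end

section \<open>The sampled top eigenvector\<close>

definition kernel_sq :: "nat \<Rightarrow> (nat \<Rightarrow> nat \<Rightarrow> real) \<Rightarrow> nat \<Rightarrow> nat \<Rightarrow> real" where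
  "kernel_sq n a i j = (\<Sum>k<n. a i k * a k j)"

locale top_eigen =
  fixes n :: nat and a :: "nat \<Rightarrow> nat \<Rightarrow> real" and lam :: real and v :: "nat \<Rightarrow> real"
  assumes sym: "sym_kernel n a" and psd: "psd_kernel n a"
    and entry_bound: "\<And>i j. i < n \<Longrightarrow> j < n \<Longrightarrow> \<bar>a i j\<bar> \<le> 1"
    and lam_pos: "lam > 0" and rayleigh: "\<And>x. bilin n a x x \<le> lam * sqnorm n x"
    and eigen: "\<And>i. i < n \<Longrightarrow> mulv n a v i = lam * v i" and unit: "sqnorm n v = 1"
begin

lemma a_commute: "i < n \<Longrightarrow> j < n \<Longrightarrow> a i j = a j i"
  using sym unfolding sym_kernel_def by auto

lemma diag_bounds: "i < n \<Longrightarrow> 0 \<le> a i i \<and> a i i \<le> 1"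
  using psd_kernel_diag_nonneg[OF psd] entry_bound[of i i] by auto

lemma kernel_sq_diag: "i < n \<Longrightarrow> kernel_sq n a i i = (\<Sum>k<n. (a i k)\<^sup>2)"
  unfolding kernel_sq_def by (intro sum.cong refl) (auto simp: a_commute power2_eq_square)

lemma kernel_sq_commute: "i < n \<Longrightarrow> j < n \<Longrightarrow> kernel_sq n a i j = kernel_sq n a j i"
  unfolding kernel_sq_def by (intro sum.cong refl) (auto simp: a_commute)

lemma kernel_sq_diag_le: "i < n \<Longrightarrow> kernel_sq n a i i \<le> lam * a i i"
  using sqnorm_mulv_le_rayleigh[OF sym psd _ rayleigh, of "basis i"] lam_pos
  by (simp add: kernel_sq_diag mulv_basis bilin_basis_basis a_commute)

lemma kernel_sq_diag_nonneg: "i < n \<Longrightarrow> kernel_sq n a i i \<ge> 0"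
  by (simp add: kernel_sq_diag sum_nonneg)

lemma kernel_sq_diag_le_lam: "i < n \<Longrightarrow> kernel_sq n a i i \<le> lam"
  using kernel_sq_diag_le diag_bounds lam_pos by (smt (verit) mult_left_le)

lemma abs_kernel_sq_le: assumes i: "i < n" and j: "j < n" shows "\<bar>kernel_sq n a i j\<bar> \<le> lam"
proof -
  have "(kernel_sq n a i j)\<^sup>2 \<le> (\<Sum>k<n. (a i k)\<^sup>2) * (\<Sum>k<n. (a k j)\<^sup>2)"
    unfolding kernel_sq_def by (rule Cauchy_Schwarz_ineq_sum)
  also have "\<dots> = kernel_sq n a i i * kernel_sq n a j j"
    using i j by (simp add: kernel_sq_diag a_commute)
  also have "\<dots> \<le> lam * lam"
    using kernel_sq_diag_le_lam[OF i] kernel_sq_diag_le_lam[OF j] kernel_sq_diag_nonneg[OF j] lam_pos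
    by (intro mult_mono) auto
  finally have "(kernel_sq n a i j)\<^sup>2 \<le> lam\<^sup>2" by (simp add: power2_eq_square)
  then show ?thesis using lam_pos by (simp add: abs_le_square_iff[symmetric] power2_abs)
qed

lemma bilin_v: "bilin n a v v = lam"
proof -
  have "bilin n a v v = (\<Sum>i<n. v i * (lam * v i))" unfolding bilin_mulv by (intro sum.cong refl) (simp add: eigen)
  also have "\<dots> = lam * sqnorm n v" by (simp add: sum_distrib_left power2_eq_square algebra_simps)
  finally show ?thesis using unit by simp
qed

lemma sqnorm_mulv_v: "sqnorm n (mulv n a v) = lam\<^sup>2"
proof -
  have "sqnorm n (mulv n a v) = sqnorm n (\<lambda>i. lam * v i)" by (intro sum.cong) (simp_all add: eigen)
  then show ?thesis using unit by (simp add: power_mult_distrib flip: sum_distrib_left)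
qed

text \<open>Delocalisation of the top eigenvector, the source of the factor \<open>1/\<lambda>\<close> in the variance bound.\<close>
lemma v_sq_le: assumes i: "i < n" shows "(v i)\<^sup>2 \<le> 1 / lam"
proof -
  have "(bilin n a (basis i) v)\<^sup>2 \<le> bilin n a (basis i) (basis i) * bilin n a v v"
    by (rule psd_kernel_cauchy_schwarz[OF sym psd])
  then have "(lam * v i)\<^sup>2 \<le> a i i * lam" using i by (simp add: bilin_basis_left mulv_basis eigen bilin_v)
  also have "\<dots> \<le> lam" using diag_bounds[OF i] lam_pos by (simp add: mult_left_le_one_le)
  finally have "lam * (lam * (v i)\<^sup>2) \<le> lam * 1" by (simp add: power2_eq_square algebra_simps)
  then show ?thesis using lam_pos by (simp add: field_simps)
qed

lemma kernel_sq_mulv_v: assumes i: "i < n" shows "(\<Sum>j<n. kernel_sq n a i j * v j) = lam\<^sup>2 * v i"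
proof -
  have "(\<Sum>j<n. kernel_sq n a i j * v j) = (\<Sum>k<n. a i k * mulv n a v k)"
    unfolding kernel_sq_def mulv_def by (simp add: sum_distrib_left sum_distrib_right mult.assoc) (rule sum.swap)
  also have "\<dots> = (\<Sum>k<n. a i k * (lam * v k))" by (intro sum.cong refl) (simp add: eigen)
  also have "\<dots> = lam * mulv n a v i" unfolding mulv_def by (simp add: sum_distrib_left algebra_simps)
  finally show ?thesis using eigen[OF i] by (simp add: power2_eq_square)
qed

end

text \<open>For the restriction \<open>y\<close> of \<open>v\<close> to the sample, the quantity \<open>|a y|\<^sup>2 - \<mu> y\<^sup>T a y\<close> that has to be
  positive is the quadratic form of \<open>M = a\<^sup>2 - \<mu> a\<close> in \<open>y\<close>, with \<open>\<mu> = \<lambda> - N\<close>. Its diagonal part is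
  small; its off-diagonal part has mean \<open>p\<^sup>2 \<Sum> offdiag \<ge> p\<^sup>2 N (\<lambda> - 1)\<close> because \<open>M v = N \<lambda> v\<close>.\<close>
locale shifted_square = top_eigen +
  fixes N :: real
  assumes N_ge_1: "N \<ge> 1" and N_less_lam: "lam > N"
begin

definition mu :: real where "mu = lam - N"

definition M :: "nat \<Rightarrow> nat \<Rightarrow> real" where "M i j = kernel_sq n a i j - mu * a i j"

definition offdiag :: "nat \<Rightarrow> nat \<Rightarrow> real" where
  "offdiag i j = (if i = j then 0 else M i j * v i * v j)"

lemma mu_bounds: "0 \<le> mu" "mu \<le> lam" unfolding mu_def using N_less_lam N_ge_1 by auto

lemma M_diag_ge: assumes i: "i < n" shows "M i i \<ge> - lam"
proof -
  have "mu * a i i \<le> lam * 1" using mu_bounds diag_bounds[OF i] by (intro mult_mono) auto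
  then show ?thesis unfolding M_def using kernel_sq_diag_nonneg[OF i] by simp
qed

lemma M_diag_le: assumes i: "i < n" shows "M i i \<le> N"
proof -
  have "M i i \<le> lam * a i i - mu * a i i" unfolding M_def using kernel_sq_diag_le[OF i] by simp
  also have "\<dots> = N * a i i" unfolding mu_def by (simp add: algebra_simps)
  also have "\<dots> \<le> N" using diag_bounds[OF i] N_ge_1 by (simp add: mult_left_le)
  finally show ?thesis .
qed

lemma abs_M_le: assumes i: "i < n" and j: "j < n" shows "\<bar>M i j\<bar> \<le> 2 * lam"
proof -
  have "\<bar>mu * a i j\<bar> \<le> lam * 1" unfolding abs_mult using mu_bounds entry_bound[OF i j] by (intro mult_mono) auto
  then show ?thesis unfolding M_def using abs_kernel_sq_le[OF i j] by simp
qed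

lemma M_commute: "i < n \<Longrightarrow> j < n \<Longrightarrow> M i j = M j i"
  unfolding M_def by (simp add: kernel_sq_commute a_commute)

lemma M_v: assumes i: "i < n" shows "(\<Sum>j<n. M i j * v j) = N * lam * v i"
proof -
  have "(\<Sum>j<n. M i j * v j) = (\<Sum>j<n. kernel_sq n a i j * v j) - mu * mulv n a v i"
    unfolding M_def mulv_def by (simp add: algebra_simps sum_subtractf sum_distrib_left)
  also have "\<dots> = lam\<^sup>2 * v i - mu * (lam * v i)" by (simp add: kernel_sq_mulv_v[OF i] eigen[OF i])
  finally show ?thesis unfolding mu_def by (simp add: power2_eq_square algebra_simps)
qed

lemma offdiag_diag: "offdiag i i = 0" unfolding offdiag_def by simp

lemma offdiag_commute: "i < n \<Longrightarrow> j < n \<Longrightarrow> offdiag i j = offdiag j i"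
  unfolding offdiag_def by (simp add: M_commute)

lemma offdiag_row_sum: assumes i: "i < n" shows "(\<Sum>j<n. offdiag i j) = (v i)\<^sup>2 * (N * lam - M i i)"
proof -
  have "(\<Sum>j<n. offdiag i j) = (\<Sum>j<n. v i * (M i j * v j) - (if j = i then M i i * v i * v i else 0))"
    unfolding offdiag_def by (intro sum.cong refl) (auto simp: algebra_simps)
  also have "\<dots> = v i * (N * lam * v i) - M i i * v i * v i"
    using i by (simp add: sum_subtractf sum_distrib_left[symmetric] M_v)
  finally show ?thesis by (simp add: power2_eq_square algebra_simps)
qed

lemma sqnorm_offdiag_row_sums_le: "sqnorm n (\<lambda>i. \<Sum>j<n. offdiag i j) \<le> 4 * N\<^sup>2 * lam"
proof -
  have row: "(\<Sum>j<n. offdiag i j)\<^sup>2 \<le> (v i)\<^sup>2 * (4 * N\<^sup>2 * lam)" if i: "i < n" for i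
  proof -
    have lam1: "lam \<ge> 1" using N_less_lam N_ge_1 by simp
    have "N * lam \<ge> N" "N * lam \<ge> lam"
      using N_ge_1 lam1 by (simp_all add: mult_le_cancel_left1 mult_le_cancel_right1)
    then have "\<bar>N * lam - M i i\<bar> \<le> \<bar>2 * N * lam\<bar>"
      using M_diag_ge[OF i] M_diag_le[OF i] by simp
    then have "(N * lam - M i i)\<^sup>2 \<le> (2 * N * lam)\<^sup>2" by (simp only: abs_le_square_iff)
    then have "(v i)\<^sup>2 * (N * lam - M i i)\<^sup>2 \<le> (1 / lam) * (2 * N * lam)\<^sup>2"
      using v_sq_le[OF i] lam_pos by (intro mult_mono) auto
    also have "\<dots> = 4 * N\<^sup>2 * lam" using lam_pos by (simp add: power2_eq_square field_simps)
    finally have "(v i)\<^sup>2 * (N * lam - M i i)\<^sup>2 \<le> 4 * N\<^sup>2 * lam" .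
    then have "(v i)\<^sup>2 * ((v i)\<^sup>2 * (N * lam - M i i)\<^sup>2) \<le> (v i)\<^sup>2 * (4 * N\<^sup>2 * lam)"
      by (intro mult_left_mono) auto
    then show ?thesis using i by (simp add: offdiag_row_sum power_mult_distrib power2_eq_square mult_ac)
  qed
  have "sqnorm n (\<lambda>i. \<Sum>j<n. offdiag i j) \<le> (\<Sum>i<n. (v i)\<^sup>2 * (4 * N\<^sup>2 * lam))"
    using row by (intro sum_mono) auto
  also have "\<dots> = 4 * N\<^sup>2 * lam" using unit by (simp add: sum_distrib_right[symmetric])
  finally show ?thesis .
qed

lemma offdiag_sq_sum_le: "(\<Sum>i<n. \<Sum>j<n. (offdiag i j)\<^sup>2) \<le> 4 * lam\<^sup>2"
proof -
  have "(offdiag i j)\<^sup>2 \<le> (4 * lam\<^sup>2) * ((v i)\<^sup>2 * (v j)\<^sup>2)" if "i < n" "j < n" for i j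
  proof (cases "i = j")
    case False
    have "\<bar>M i j\<bar> \<le> \<bar>2 * lam\<bar>" using abs_M_le[OF that] lam_pos by simp
    then have "(M i j)\<^sup>2 \<le> (2 * lam)\<^sup>2" by (simp only: abs_le_square_iff)
    then have "(M i j)\<^sup>2 * ((v i)\<^sup>2 * (v j)\<^sup>2) \<le> (2 * lam)\<^sup>2 * ((v i)\<^sup>2 * (v j)\<^sup>2)"
      by (intro mult_right_mono) auto
    then show ?thesis using False by (simp add: offdiag_def power_mult_distrib)
  qed (simp add: offdiag_def)
  then have "(\<Sum>i<n. \<Sum>j<n. (offdiag i j)\<^sup>2) \<le> (\<Sum>i<n. \<Sum>j<n. (4 * lam\<^sup>2) * ((v i)\<^sup>2 * (v j)\<^sup>2))"
    by (intro sum_mono) auto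
  also have "\<dots> = 4 * lam\<^sup>2" using unit
    by (simp add: sum_distrib_left[symmetric] sum_distrib_right[symmetric])
  finally show ?thesis .
qed

lemma offdiag_sum_ge: "(\<Sum>i<n. \<Sum>j<n. offdiag i j) \<ge> N * (lam - 1)"
proof -
  have "(\<Sum>i<n. (v i)\<^sup>2 * (N * lam - N)) \<le> (\<Sum>i<n. \<Sum>j<n. offdiag i j)"
    by (intro sum_mono) (auto simp: offdiag_row_sum M_diag_le intro!: mult_left_mono)
  moreover have "(\<Sum>i<n. (v i)\<^sup>2 * (N * lam - N)) = N * (lam - 1)"
    by (simp only: sum_distrib_right[symmetric] unit) (simp add: algebra_simps)
  ultimately show ?thesis by simp
qed

lemma restricted_gap_decomp:
  fixes f :: "nat \<Rightarrow> bool"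
  defines "y \<equiv> \<lambda>i. of_bool (f i) * v i"
  shows "sqnorm n (mulv n a y) - mu * bilin n a y y =
    (\<Sum>i<n. M i i * (v i)\<^sup>2 * of_bool (f i)) + (\<Sum>i<n. \<Sum>j<n. offdiag i j * of_bool (f i) * of_bool (f j))"
proof -
  have "sqnorm n (mulv n a y) = (\<Sum>i<n. \<Sum>j<n. \<Sum>l<n. a i j * y j * (a i l * y l))"
    unfolding mulv_def by (simp add: power2_eq_square sum_product)
  also have "\<dots> = (\<Sum>j<n. \<Sum>i<n. \<Sum>l<n. a i j * y j * (a i l * y l))"
    by (rule sum.swap)
  also have "\<dots> = (\<Sum>j<n. \<Sum>l<n. \<Sum>i<n. a i j * y j * (a i l * y l))"
    by (rule sum.cong[OF refl], rule sum.swap)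
  also have "\<dots> = (\<Sum>j<n. \<Sum>l<n. kernel_sq n a j l * y j * y l)"
    unfolding kernel_sq_def sum_distrib_right
    by (intro sum.cong refl) (auto simp: a_commute algebra_simps)
  finally have "sqnorm n (mulv n a y) - mu * bilin n a y y = (\<Sum>j<n. \<Sum>l<n. M j l * y j * y l)"
    unfolding bilin_def M_def by (simp add: sum_subtractf[symmetric] sum_distrib_left algebra_simps)
  also have "\<dots> = (\<Sum>j<n. \<Sum>l<n. (if l = j then M j j * (v j)\<^sup>2 * of_bool (f j) else 0) +
      offdiag j l * of_bool (f j) * of_bool (f l))"
    unfolding y_def offdiag_def by (intro sum.cong refl) (auto simp: power2_eq_square)
  also have "\<dots> = (\<Sum>i<n. M i i * (v i)\<^sup>2 * of_bool (f i)) +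
      (\<Sum>i<n. \<Sum>j<n. offdiag i j * of_bool (f i) * of_bool (f j))"
    by (simp add: sum.distrib)
  finally show ?thesis .
qed

end

locale sampling_analysis = shifted_square n a lam v N + bernoulli_sample n p
  for n a lam v N p +
  assumes p_N: "p * N = 4096"
begin

definition restr :: "(nat \<Rightarrow> bool) \<Rightarrow> nat \<Rightarrow> real" where
  "restr f i = of_bool (f i) * v i"

definition weight :: "(nat \<Rightarrow> bool) \<Rightarrow> real" where
  "weight f = (\<Sum>i<n. (v i)\<^sup>2 * of_bool (f i))"

definition offdiag_form :: "(nat \<Rightarrow> bool) \<Rightarrow> real" where
  "offdiag_form f = (\<Sum>i<n. \<Sum>j<n. offdiag i j * of_bool (f i) * of_bool (f j))"

definition offdiag_mean :: real where
  "offdiag_mean = p\<^sup>2 * (\<Sum>i<n. \<Sum>j<n. offdiag i j)"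

lemma p_pos: "p > 0" using p_N p_nonneg by (cases "p = 0") auto

lemma p_lam_ge: "p * lam \<ge> 4096"
  using mult_left_mono[OF less_imp_le[OF N_less_lam] p_nonneg] p_N by simp

lemma offdiag_mean_ge: "offdiag_mean \<ge> 2048 * (p * lam)"
proof -
  have N_ge: "N \<ge> 4096" using mult_right_mono[OF p_le_1, of N] N_ge_1 p_N by simp
  have "2048 * (p * lam) = (p * N) * (p * lam) / 2" using p_N by simp
  also have "\<dots> = p\<^sup>2 * (N * (lam / 2))" by (simp add: power2_eq_square)
  also have "\<dots> \<le> p\<^sup>2 * (N * (lam - 1))"
    using N_less_lam N_ge N_ge_1 by (intro mult_left_mono) auto
  also have "\<dots> \<le> offdiag_mean" unfolding offdiag_mean_def using offdiag_sum_ge by (intro mult_left_mono) auto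
  finally show ?thesis .
qed

lemma offdiag_mean_pos: "offdiag_mean > 0"
  using offdiag_mean_ge p_lam_ge by simp

lemma gap_ge: "sqnorm n (mulv n a (restr f)) - mu * bilin n a (restr f) (restr f) \<ge> offdiag_form f - lam * weight f"
proof -
  have "- lam * ((v i)\<^sup>2 * of_bool (f i)) \<le> M i i * (v i)\<^sup>2 * of_bool (f i)" if "i < n" for i
    using mult_right_mono[OF M_diag_ge[OF that] zero_le_power2[of "v i"]] by (cases "f i") auto
  then have "- lam * weight f \<le> (\<Sum>i<n. M i i * (v i)\<^sup>2 * of_bool (f i))"
    unfolding weight_def sum_distrib_left by (intro sum_mono) auto
  then show ?thesis
    unfolding restr_def restricted_gap_decomp offdiag_form_def by simp
qed

lemma prob_weight_large: "measure_pmf.prob P {f. lam * weight f \<ge> offdiag_mean / 2} \<le> 1 / 1024"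
proof -
  have "measure_pmf.expectation P weight = (\<Sum>i<n. measure_pmf.expectation P (\<lambda>f. (v i)\<^sup>2 * of_bool (f i)))"
    unfolding weight_def by (rule expectation_sum)
  also have "\<dots> = (\<Sum>i<n. (v i)\<^sup>2 * p)"
    by (intro sum.cong refl) (simp only: integral_mult_right_zero expectation_indicator lessThan_iff)
  finally have "measure_pmf.expectation P (\<lambda>f. lam * weight f) = lam * (\<Sum>i<n. (v i)\<^sup>2 * p)"
    by (simp only: integral_mult_right_zero)
  also have "\<dots> = lam * p" by (simp add: sum_distrib_right[symmetric] unit)
  finally have E: "measure_pmf.expectation P (\<lambda>f. lam * weight f) = lam * p" .
  have "0 \<le> lam * weight f" for f
    unfolding weight_def using lam_pos by (intro mult_nonneg_nonneg sum_nonneg) auto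
  then have "measure_pmf.prob P {f. lam * weight f \<ge> offdiag_mean / 2} \<le> lam * p / (offdiag_mean / 2)"
    using prob_ge_le_expectation[of "\<lambda>f. lam * weight f" "offdiag_mean / 2"] offdiag_mean_pos
    unfolding E by simp
  also have "\<dots> \<le> lam * p / (2048 * (p * lam) / 2)"
    using offdiag_mean_ge p_lam_ge lam_pos p_pos by (intro divide_left_mono) (auto simp: mult.commute)
  also have "\<dots> = 1 / 1024" using lam_pos p_pos by (simp add: field_simps)
  finally show ?thesis .
qed

lemma prob_offdiag_form_deviates:
  "measure_pmf.prob P {f. (offdiag_form f - offdiag_mean)\<^sup>2 \<ge> offdiag_mean\<^sup>2 / 4} \<le> 1 / 8 + 1 / 65536"
proof -
  define V where "V = 8 * p\<^sup>2 * (p * (1 - p)) * sqnorm n (\<lambda>i. \<Sum>j<n. offdiag i j) +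
    4 * (p * (1 - p))\<^sup>2 * (\<Sum>i<n. \<Sum>j<n. (offdiag i j)\<^sup>2)"
  have pq: "0 \<le> p * (1 - p)" "p * (1 - p) \<le> p" using p_nonneg p_le_1 by (auto simp: mult_left_le)
  have "8 * p\<^sup>2 * (p * (1 - p)) * sqnorm n (\<lambda>i. \<Sum>j<n. offdiag i j) \<le> 8 * p\<^sup>2 * p * (4 * N\<^sup>2 * lam)"
    using pq sqnorm_offdiag_row_sums_le by (intro mult_mono mult_left_mono) (auto intro: sum_nonneg)
  also have "\<dots> = 32 * p * 4096\<^sup>2 * lam" unfolding p_N[symmetric] by (simp add: power2_eq_square)
  finally have V1: "8 * p\<^sup>2 * (p * (1 - p)) * sqnorm n (\<lambda>i. \<Sum>j<n. offdiag i j) \<le> 32 * p * 4096\<^sup>2 * lam" .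
  have "(p * (1 - p))\<^sup>2 \<le> p\<^sup>2" using pq by (intro power_mono) auto
  then have V2: "4 * (p * (1 - p))\<^sup>2 * (\<Sum>i<n. \<Sum>j<n. (offdiag i j)\<^sup>2) \<le> 4 * p\<^sup>2 * (4 * lam\<^sup>2)"
    using offdiag_sq_sum_le by (intro mult_mono mult_left_mono) (auto intro!: sum_nonneg)
  have "measure_pmf.prob P {f. (offdiag_form f - offdiag_mean)\<^sup>2 \<ge> offdiag_mean\<^sup>2 / 4} \<le> V / (offdiag_mean\<^sup>2 / 4)"
    unfolding offdiag_form_def offdiag_mean_def V_def
    by (rule indicator_quadratic_tail[OF offdiag_diag offdiag_commute])
      (use offdiag_mean_pos offdiag_mean_def in auto)
  also have "\<dots> \<le> (32 * p * 4096\<^sup>2 * lam + 16 * p\<^sup>2 * lam\<^sup>2) / ((2048 * (p * lam))\<^sup>2 / 4)"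
  proof (rule frac_le)
    have "4 * p\<^sup>2 * (4 * lam\<^sup>2) = 16 * p\<^sup>2 * lam\<^sup>2" by simp
    then show "V \<le> 32 * p * 4096\<^sup>2 * lam + 16 * p\<^sup>2 * lam\<^sup>2" using V1 V2 unfolding V_def by linarith
    show "(2048 * (p * lam))\<^sup>2 / 4 \<le> offdiag_mean\<^sup>2 / 4"
      using offdiag_mean_ge p_lam_ge by (intro divide_right_mono power_mono) auto
  qed (use p_pos lam_pos p_lam_ge in auto)
  also have "\<dots> = 512 / (p * lam) + 1 / 65536"
    using p_pos lam_pos by (simp add: field_simps power2_eq_square)
  also have "\<dots> \<le> 512 / 4096 + 1 / 65536" using p_lam_ge by (intro add_right_mono divide_left_mono) auto
  finally show ?thesis by simp
qed

text \<open>If the gap is not positive then either the diagonal weight or the deviation of the off-diagonal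
  form from its mean exceeds half the mean.\<close>
lemma prob_gap_nonpos:
  "measure_pmf.prob P {f. \<not> sqnorm n (mulv n a (restr f)) > mu * bilin n a (restr f) (restr f)} \<le> 1 / 4"
proof -
  have "{f. \<not> sqnorm n (mulv n a (restr f)) > mu * bilin n a (restr f) (restr f)} \<subseteq>
      {f. lam * weight f \<ge> offdiag_mean / 2} \<union> {f. (offdiag_form f - offdiag_mean)\<^sup>2 \<ge> offdiag_mean\<^sup>2 / 4}"
  proof (intro subsetI CollectI)
    fix f assume "f \<in> {f. \<not> sqnorm n (mulv n a (restr f)) > mu * bilin n a (restr f) (restr f)}"
    then have le: "offdiag_form f \<le> lam * weight f" using gap_ge[of f] by simp
    show "f \<in> {f. lam * weight f \<ge> offdiag_mean / 2} \<union> {f. (offdiag_form f - offdiag_mean)\<^sup>2 \<ge> offdiag_mean\<^sup>2 / 4}"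
    proof (cases "lam * weight f \<ge> offdiag_mean / 2")
      case False
      then have "offdiag_mean / 2 \<le> \<bar>offdiag_form f - offdiag_mean\<bar>" using le by (simp add: abs_if)
      then have "(offdiag_mean / 2)\<^sup>2 \<le> (offdiag_form f - offdiag_mean)\<^sup>2"
        using offdiag_mean_pos by (metis abs_le_square_iff abs_of_nonneg less_imp_le half_gt_zero)
      then show ?thesis by (simp add: power_divide)
    qed simp
  qed
  then have "measure_pmf.prob P {f. \<not> sqnorm n (mulv n a (restr f)) > mu * bilin n a (restr f) (restr f)} \<le>
      measure_pmf.prob P {f. lam * weight f \<ge> offdiag_mean / 2} +
      measure_pmf.prob P {f. (offdiag_form f - offdiag_mean)\<^sup>2 \<ge> offdiag_mean\<^sup>2 / 4}"
    by (rule order_trans[OF measure_pmf.finite_measure_mono measure_Un_le]) auto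
  then show ?thesis using prob_weight_large prob_offdiag_form_deviates by simp
qed

end

section \<open>Success probability\<close>

lemma algE_output_ge_if_gap:
  fixes A :: "real Matrix.mat"
  assumes A: "A \<in> carrier_mat n n" "transpose_mat A = A" "psd_mat A" and T: "T \<subseteq> {..<n}"
    and supp: "\<And>i. i < n \<Longrightarrow> i \<notin> T \<Longrightarrow> y i = 0" and \<mu>: "0 \<le> \<mu>"
    and gap: "sqnorm n (mulv n (entries A) y) > \<mu> * bilin n (entries A) y y"
    and u: "u \<in> algE_outputs A T"
  shows "scalar_prod u (A *\<^sub>v u) \<ge> \<mu>"
proof (rule algE_output_ge[OF A T _ _ \<mu> _ u])
  let ?y = "Matrix.vec n y"
  show y: "?y \<in> carrier_vec n" by simp
  show "?y $ i = 0" if "i < n" "i \<notin> T" for i using supp that by simp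
  have "scalar_prod ?y (A *\<^sub>v ?y) = bilin n (entries A) y y"
    unfolding scalar_prod_mult_mat_vec_bilin[OF A(1) y y] by (rule bilin_cong) auto
  moreover have "(A *\<^sub>v ?y) $ i = mulv n (entries A) y i" if "i < n" for i
    unfolding mult_mat_vec_nth_mulv[OF A(1) y that] by (rule mulv_cong) simp
  then have "scalar_prod (A *\<^sub>v ?y) (A *\<^sub>v ?y) = sqnorm n (mulv n (entries A) y)"
    using A(1) by (simp add: scalar_prod_self_sqnorm[of _ n])
  ultimately show "scalar_prod (A *\<^sub>v ?y) (A *\<^sub>v ?y) > \<mu> * scalar_prod ?y (A *\<^sub>v ?y)" using gap by simp
qed

lemma prob_sample_set_all:
  assumes "\<And>T. T \<subseteq> {..<n} \<Longrightarrow> Q T"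
  shows "measure_pmf.prob (sample_set n p) {T. Q T} = 1"
proof -
  have "{f. Q {i. i < n \<and> f i}} = UNIV" using assms by (auto simp: subset_eq)
  then show ?thesis by (simp add: sample_set_def measure_pmf.prob_space)
qed

lemma sample_set_one: "sample_set n 1 = return_pmf {..<n}"
proof -
  have "bernoulli_pmf 1 = return_pmf True" by (rule pmf_eqI) (simp split: split_indicator)
  then show ?thesis by (simp add: sample_set_def Pi_pmf_return_pmf lessThan_def)
qed

lemma obtain_top_eigen:
  fixes A :: "real Matrix.mat"
  assumes A: "A \<in> carrier_mat n n" "transpose_mat A = A" "psd_mat A"
    and entry_bound: "\<forall>i<n. \<forall>j<n. \<bar>A $$ (i, j)\<bar> \<le> 1" and n: "n > 0" and pos: "lambda1 A > 0"
  obtains v where "top_eigen n (entries A) (lambda1 A) v"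
proof -
  have lam: "lambda1 A = rayleigh_max n (entries A)" by (rule lambda1_eq_rayleigh_max[OF A(1,2) n])
  obtain v where v: "sqnorm n v = 1" "\<And>i. i < n \<Longrightarrow> mulv n (entries A) v i = lambda1 A * v i"
    using unit_eigenfunction[OF A(1) rayleigh_max_eigenvalue[OF A(1,2) n]] unfolding lam by metis
  have "top_eigen n (entries A) (lambda1 A) v"
  proof
    show "sym_kernel n (entries A)" "psd_kernel n (entries A)"
      using sym_kernel_entries[OF A(1,2)] psd_kernel_entries[OF A(1,3)] .
    show "\<bar>entries A i j\<bar> \<le> 1" if "i < n" "j < n" for i j using entry_bound that by (simp add: entries_def)
    show "bilin n (entries A) x x \<le> lambda1 A * sqnorm n x" for x
      unfolding lam by (rule bilin_le_rayleigh_max[OF n])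
  qed (use pos v in auto)
  then show ?thesis by (rule that)
qed

lemma algE_success_prob_large:
  fixes A :: "real Matrix.mat"
  assumes A: "A \<in> carrier_mat n n" "transpose_mat A = A" "psd_mat A"
    and entry_bound: "\<forall>i<n. \<forall>j<n. \<bar>A $$ (i, j)\<bar> \<le> 1"
    and n: "n > 0" and N: "0 < N" "N < lambda1 A"
  shows "measure_pmf.prob (sample_set n (min 1 (4096 / N)))
    {T. \<forall>u \<in> algE_outputs A T. scalar_prod u (A *\<^sub>v u) \<ge> lambda1 A - N} \<ge> 3 / 4"
proof -
  define lam where "lam = lambda1 A"
  define good where "good T \<longleftrightarrow> (\<forall>u \<in> algE_outputs A T. scalar_prod u (A *\<^sub>v u) \<ge> lam - N)" for T
  obtain v where "top_eigen n (entries A) lam v"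
    using obtain_top_eigen[OF A entry_bound n] N unfolding lam_def by force
  then interpret top_eigen n "entries A" lam v .
  have good_if_gap: "good T"
    if "T \<subseteq> {..<n}" "\<And>i. i < n \<Longrightarrow> i \<notin> T \<Longrightarrow> y i = 0"
      and "sqnorm n (mulv n (entries A) y) > (lam - N) * bilin n (entries A) y y" for T y
    unfolding good_def using algE_output_ge_if_gap[OF A that(1,2) _ that(3)] N unfolding lam_def by simp
  have "measure_pmf.prob (sample_set n (min 1 (4096 / N))) {T. good T} \<ge> 3 / 4"
  proof (cases "4096 / N < 1")
    case False
    have "(lam - N) * lam < lam\<^sup>2" using lam_pos N by (simp add: power2_eq_square)
    then have "good {..<n}" by (intro good_if_gap[of _ v]) (auto simp: sqnorm_mulv_v bilin_v)
    then show ?thesis using False by (simp add: sample_set_one)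
  next
    case True
    define p where "p = 4096 / N"
    interpret sampling_analysis n "entries A" lam v N p
      by unfold_locales (use True N in \<open>auto simp: p_def lam_def\<close>)
    define bad where "bad = {f. \<not> sqnorm n (mulv n (entries A) (restr f)) >
        mu * bilin n (entries A) (restr f) (restr f)}"
    have "1 - 1 / 4 \<le> 1 - measure_pmf.prob P bad" using prob_gap_nonpos unfolding bad_def by simp
    also have "\<dots> = measure_pmf.prob P (UNIV - bad)" using measure_pmf.prob_compl[of bad P] by simp
    also have "\<dots> \<le> measure_pmf.prob P {f. good {i. i < n \<and> f i}}"
    proof (rule measure_pmf.finite_measure_mono, safe)
      fix f assume "f \<notin> bad"
      then show "good {i. i < n \<and> f i}"
        by (intro good_if_gap[of _ "restr f"]) (auto simp: bad_def restr_def mu_def)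
    qed simp
    finally show ?thesis using True unfolding P_def by (simp add: sample_set_def p_def)
  qed
  then show ?thesis unfolding good_def lam_def .
qed

lemma algE_success_prob:
  fixes A :: "real Matrix.mat" and \<epsilon> :: real
  assumes \<epsilon>: "0 < \<epsilon>" and A: "A \<in> carrier_mat n n" "transpose_mat A = A" "psd_mat A"
    and entry_bound: "\<forall>i<n. \<forall>j<n. \<bar>A $$ (i, j)\<bar> \<le> 1"
  defines "N \<equiv> \<epsilon> * real n"
  shows "measure_pmf.prob (sample_set n (min 1 (4096 / N)))
    {T. \<forall>u \<in> algE_outputs A T. scalar_prod u (A *\<^sub>v u) \<ge> lambda1 A - N} \<ge> 3 / 4"
proof -
  define good where "good T \<longleftrightarrow> (\<forall>u \<in> algE_outputs A T. scalar_prod u (A *\<^sub>v u) \<ge> lambda1 A - N)" for T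
  consider "n = 0" | "lambda1 A \<le> N" | "n > 0" "lambda1 A > N" by linarith
  then have "measure_pmf.prob (sample_set n (min 1 (4096 / N))) {T. good T} \<ge> 3 / 4"
  proof cases
    case 1
    then have "good T" for T using A(1) algE_outputs_dim0 unfolding good_def by simp
    then show ?thesis by (simp add: prob_sample_set_all)
  next
    case 2
    have "good T" for T unfolding good_def
    proof
      fix u assume "u \<in> algE_outputs A T"
      then show "lambda1 A - N \<le> scalar_prod u (A *\<^sub>v u)" using algE_outputs_nonneg[OF A(3)] 2 by fastforce
    qed
    then show ?thesis by (simp add: prob_sample_set_all)
  next
    case 3
    then show ?thesis using algE_success_prob_large[OF A entry_bound] \<epsilon> unfolding good_def N_def by simp
  qed
  then show ?thesis unfolding good_def .
qed

theorem mainTheorem4: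
  shows "\<exists>c::real > 0. \<forall>(n::nat) (\<epsilon>::real) (A::real Matrix.mat).
     0 < \<epsilon> \<and> \<epsilon> < 1 \<and> A \<in> carrier_mat n n \<and> transpose_mat A = A \<and> psd_mat A \<and>
     (\<forall>i < n. \<forall>j < n. \<bar>A $$ (i, j)\<bar> \<le> 1) \<longrightarrow>
     measure_pmf.prob (sample_set n (min 1 (c / (\<epsilon> * real n))))
       {T. \<forall>u \<in> algE_outputs A T. scalar_prod u (A *\<^sub>v u) \<ge> lambda1 A - \<epsilon> * real n} \<ge> 3 / 4"
  using algE_success_prob by (intro exI[of _ 4096]) auto

end
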